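(* Let $m\in\mathbb{N}$ and let $\mathbb{R}^m$ be equipped with a norm $\|\cdot\|$. For $i=1,\ldots,m$, let $n_i\in\mathbb{N}$, $\beta_i>0$, $\underline{\kappa}_i\in\mathbb{R}$, and let $\kappa_{i,j}:=\underline{\kappa}_i+j\beta_i$ for $j=0,\ldots,n_i$. Moreover, for $i=1,\ldots,m$, let $\mathcal{I}_i:=\big\{[\kappa_{i,0},\kappa_{i,1}],\ldots,[\kappa_{i,n_i-1},\kappa_{i,n_i}]\big\}$, let $\overline{\mathcal{I}}_i:=\mathcal{I}_i \cup \big\{(-\infty,\kappa_{i,0}],[\kappa_{i,n_i},\infty)\big\}$, and define \begin{align*} \mathfrak{C}_0&:=\big\{I_1\times\cdots\times I_m : I_i\in\mathcal{I}_i\;\forall 1\le i\le m\big\},\\ \mathfrak{C}&:=\big\{I_1\times\cdots\times I_m : I_i\in\overline{\mathcal{I}}_i\;\forall 1\le i\le m\big\},\\ \mathcal{G}_0&:=\Big\{\mathbb{R}^m\ni(x_1,\ldots,x_m)^\top\mapsto \Big(\max_{i\in L}\big\{\beta_i^{-1}(x_i-\kappa_{i,j_i})^+\big\}\Big)^+\in\mathbb{R} : 0\le j_i\le n_i\;\forall i\in L,\; L\subseteq\{1,\ldots,m\}\Big\},\\ \mathcal{G}_1&:=\mathcal{G}_0 \cup \big\{\mathbb{R}^m\ni(x_1,\ldots,x_m)^\top\mapsto x_i\in\mathbb{R}:1\le i\le m\big\},\\ \mathcal{G}_p&:=\mathcal{G}_0 \cup \big\{\mathbb{R}^m\ni(x_1,\ldots,x_m)^\top\mapsto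 \big((\kappa_{i,0}-x_i)^+\big)^p\in\mathbb{R}:1\le i\le m\big\}\\ &\phantom{:=\;\mathcal{G}_0}\cup \big\{\mathbb{R}^m\ni(x_1,\ldots,x_m)^\top\mapsto \big((x_i-\kappa_{i,n_i})^+\big)^p\in\mathbb{R}:1\le i\le m\big\}\qquad\forall p\in(1,\infty). \end{align*} Then, the following statements hold. (i) $\mathfrak{C}_0$ is a polyhedral cover of $[\kappa_{1,0},\kappa_{1,n_1}]\times\cdots\times[\kappa_{m,0},\kappa_{m,n_m}]$ (and so also of any $\mathcal{Y}\subseteq [\kappa_{1,0},\kappa_{1,n_1}]\times\cdots\times[\kappa_{m,0},\kappa_{m,n_m}]$) and $\mathcal{G}_0$ is an interpolation function set for $\mathfrak{C}_0$. (ii) $\mathfrak{C}$ is a polyhedral cover of $\mathbb{R}^m$ (and so also of any $\mathcal{Y}\subseteq\mathbb{R}^m$) and for all $p\in[1,\infty)$, $\mathcal{G}_p$ is a $p$-interpolation function set for $\mathfrak{C}$.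
   Context: Definitions used. For a set $\mathcal{G}$ of real-valued functions, $\mathrm{span}_1(\mathcal{G})$ denotes the set of finite linear combinations of functions in $\mathcal{G}$ plus a constant intercept, i.e. $\{y_0+\sum_{j=1}^k y_j g_j: k\in\mathbb{N}_0,\ y_0,\ldots,y_k\in\mathbb{R},\ g_1,\ldots,g_k\in\mathcal{G}\}$. Faces/extreme points/extreme directions are in the sense of Rockafellar: a convex subset $C'$ of a convex set $C$ is a face if whenever $\lambda x_1+(1-\lambda)x_2\in C'$ with $0<\lambda<1$, $x_1,x_2\in C$, then $x_1,x_2\in C'$; an extreme point is a point that is a face; $z$ is an extreme direction of $C$ if $\{x+\lambda z:\lambda\ge0\}$ is a face of $C$ for some $x\in C$. Polyhedral cover: for $\mathcal{Y}\subseteq\mathbb{R}^m$, a collection $\mathfrak{C}$ of subsets of $\mathbb{R}^m$ is a polyhedral cover of $\mathcal{Y}$ if (a) $|\mathfrak{C}|<\infty$ and every $C\in\mathfrak{C}$ is a polyhedron with at least one extreme point; (b) $\bigcup_{C\in\mathfrak{C}}C\supseteq\mathcal{Y}$; (c) if $C_1,C_2\in\mathfrak{C}$ and $C_1\cap C_2\neq\emptyset$ then $C_1\cap C_2$ is a face of both. It is bounded if every $C$ is bounded. $V(C)$, $D(C)$ denote the sets of extreme points and extreme directions of $C$; $\mathfrak{F}(\mathfrak{C})$ is the set of non-empty faces of members of $\mathfrak{C}$; $V(\mathfrak{C})=\bigcup_{C}V(C)$, $D(\mathfrak{C})=\bigcup_C D(C)$. Vertex interpolation function set for $\mathfrak{C}$: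 functions $\{g_v:\bigcup_{C\in\mathfrak{C}}C\to\mathbb{R} : v\in V(\mathfrak{C})\}$ such that (VIF1) $g_v\ge0$; (VIF2) $g_v(v')=\mathbf{1}_{\{v=v'\}}$ for $v,v'\in V(\mathfrak{C})$; (VIF3) for every $F\in\mathfrak{F}(\mathfrak{C})$ and $x\in F$, $\sum_{v\in V(F)}g_v(x)=1$; (VIF4) for every $F\in\mathfrak{F}(\mathfrak{C})$, $x\in F$ and $v\in V(\mathfrak{C})\setminus V(F)$, $g_v(x)=0$. $p$-radial function set (for unbounded $\mathfrak{C}$): functions $\{\overline{g}_u : u\in D(\mathfrak{C})\}$ with (RF1) $\overline{g}_u\ge0$ and (RF2) for every unbounded $F\in\mathfrak{F}(\mathfrak{C})$ and $x\in F$, $\big(\min_{y\in\mathrm{conv}(V(F))}\|x-y\|\big)^p\le\sum_{u\in D(F)}\overline{g}_u(x)$. $\mathcal{G}$ is an interpolation function set for a bounded $\mathfrak{C}$ if some vertex interpolation function set for $\mathfrak{C}$ is contained in $\mathrm{span}_1(\mathcal{G})$; for unbounded $\mathfrak{C}$, $\mathcal{G}$ is a $p$-interpolation function set if both a vertex interpolation function set and a $p$-radial function set for $\mathfrak{C}$ are contained in $\mathrm{span}_1(\mathcal{G})$. *)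

theory Defs
  imports "HOL-Analysis.Analysis"
begin

text \<open>A norm on a real vector space (the statement allows an arbitrary norm on R^m).\<close>
definition is_norm :: "('a::real_vector \<Rightarrow> real) \<Rightarrow> bool" where
  "is_norm N \<longleftrightarrow> (\<forall>x. N x = 0 \<longleftrightarrow> x = 0) \<and>
                 (\<forall>c x. N (c *\<^sub>R x) = \<bar>c\<bar> * N x) \<and>
                 (\<forall>x y. N (x + y) \<le> N x + N y)"

definition span1 :: "('a \<Rightarrow> real) set \<Rightarrow> ('a \<Rightarrow> real) set" where
  "span1 G = {f. \<exists>(y0::real) (k::nat) (c::nat \<Rightarrow> real) (gs::nat \<Rightarrow> 'a \<Rightarrow> real).
                  (\<forall>j<k. gs j \<in> G) \<and> f = (\<lambda>x. y0 + (\<Sum>j<k. c j * gs j x))}"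

text \<open>Extreme points (library notion extreme_point_of, equivalent to {v} being a face).\<close>
definition Vset :: "'a::real_vector set \<Rightarrow> 'a set" where
  "Vset C = {v. v extreme_point_of C}"

text \<open>Directions are only determined up to positive
  scaling; we take the (Euclidean-)unit representative of each direction so that D(C)
  is a finite set.\<close>
definition Dset :: "'a::real_normed_vector set \<Rightarrow> 'a set" where
  "Dset C = {z. norm z = 1 \<and> (\<exists>x\<in>C. {x + t *\<^sub>R z | t. t \<ge> 0} face_of C)}"

definition polyhedral_cover :: "'a::euclidean_space set set \<Rightarrow> 'a set \<Rightarrow> bool" where
  "polyhedral_cover \<C> Y \<longleftrightarrow>
     finite \<C> \<and> (\<forall>C\<in>\<C>. polyhedron C \<and> Vset C \<noteq> {}) \<and>
     Y \<subseteq> \<Union>\<C> \<and>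
     (\<forall>C1\<in>\<C>. \<forall>C2\<in>\<C>. C1 \<inter> C2 \<noteq> {} \<longrightarrow> (C1 \<inter> C2) face_of C1 \<and> (C1 \<inter> C2) face_of C2)"

definition Faces :: "'a::real_vector set set \<Rightarrow> 'a set set" where
  "Faces \<C> = {F. F \<noteq> {} \<and> (\<exists>C\<in>\<C>. F face_of C)}"

definition Vcov :: "'a::real_vector set set \<Rightarrow> 'a set" where
  "Vcov \<C> = (\<Union>C\<in>\<C>. Vset C)"

definition Dcov :: "'a::real_normed_vector set set \<Rightarrow> 'a set" where
  "Dcov \<C> = (\<Union>C\<in>\<C>. Dset C)"

text \<open>Vertex interpolation function set {g v : v \<in> V(\<C>)}, functions on \<Union>\<C>
  (only their values on \<Union>\<C> matter).\<close>
definition vertex_interp_set :: "'a::real_vector set set \<Rightarrow> ('a \<Rightarrow> 'a \<Rightarrow> real) \<Rightarrow> bool" where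
  "vertex_interp_set \<C> g \<longleftrightarrow>
     (\<forall>v\<in>Vcov \<C>. \<forall>x\<in>\<Union>\<C>. g v x \<ge> 0) \<and>
     (\<forall>v\<in>Vcov \<C>. \<forall>v'\<in>Vcov \<C>. g v v' = (if v = v' then 1 else 0)) \<and>
     (\<forall>F\<in>Faces \<C>. \<forall>x\<in>F. (\<Sum>v\<in>Vset F. g v x) = 1) \<and>
     (\<forall>F\<in>Faces \<C>. \<forall>x\<in>F. \<forall>v\<in>Vcov \<C> - Vset F. g v x = 0)"

definition radial_set :: "('a::real_normed_vector \<Rightarrow> real) \<Rightarrow> real \<Rightarrow> 'a set set \<Rightarrow> ('a \<Rightarrow> 'a \<Rightarrow> real) \<Rightarrow> bool" where
  "radial_set N p \<C> gb \<longleftrightarrow>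
     (\<forall>u\<in>Dcov \<C>. \<forall>x\<in>\<Union>\<C>. gb u x \<ge> 0) \<and>
     (\<forall>F\<in>Faces \<C>. \<not> bounded F \<longrightarrow>
        (\<forall>x\<in>F. (INF y\<in>convex hull (Vset F). N (x - y)) powr p \<le> (\<Sum>u\<in>Dset F. gb u x)))"

definition interp_function_set :: "('a::euclidean_space \<Rightarrow> real) set \<Rightarrow> 'a set set \<Rightarrow> bool" where
  "interp_function_set G \<C> \<longleftrightarrow>
     (\<exists>g. vertex_interp_set \<C> g \<and> (\<forall>v\<in>Vcov \<C>. g v \<in> span1 G))"

definition p_interp_function_set ::
  "('a::euclidean_space \<Rightarrow> real) \<Rightarrow> real \<Rightarrow> ('a \<Rightarrow> real) set \<Rightarrow> 'a set set \<Rightarrow> bool" where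
  "p_interp_function_set N p G \<C> \<longleftrightarrow>
     (\<exists>g. vertex_interp_set \<C> g \<and> (\<forall>v\<in>Vcov \<C>. g v \<in> span1 G)) \<and>
     (\<exists>gb. radial_set N p \<C> gb \<and> (\<forall>u\<in>Dcov \<C>. gb u \<in> span1 G))"

text \<open>Coordinates are indexed by a finite type 'm (so m = CARD('m)).
  kl i = underline kappa_i, b i = beta_i.\<close>
definition knot :: "('m \<Rightarrow> real) \<Rightarrow> ('m \<Rightarrow> real) \<Rightarrow> 'm \<Rightarrow> nat \<Rightarrow> real" where
  "knot kl b i j = kl i + real j * b i"

definition Ints_i :: "('m \<Rightarrow> nat) \<Rightarrow> ('m \<Rightarrow> real) \<Rightarrow> ('m \<Rightarrow> real) \<Rightarrow> 'm \<Rightarrow> real set set" where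
  "Ints_i n kl b i = {{knot kl b i j .. knot kl b i (Suc j)} | j. j < n i}"

definition Ints_bar_i :: "('m \<Rightarrow> nat) \<Rightarrow> ('m \<Rightarrow> real) \<Rightarrow> ('m \<Rightarrow> real) \<Rightarrow> 'm \<Rightarrow> real set set" where
  "Ints_bar_i n kl b i = Ints_i n kl b i \<union> {{..knot kl b i 0}, {knot kl b i (n i)..}}"

definition prod_cells :: "('m::finite \<Rightarrow> real set set) \<Rightarrow> (real^'m) set set" where
  "prod_cells II = {{x. \<forall>i. x $ i \<in> I i} | I. \<forall>i. I i \<in> II i}"

definition cover0 :: "('m::finite \<Rightarrow> nat) \<Rightarrow> ('m \<Rightarrow> real) \<Rightarrow> ('m \<Rightarrow> real) \<Rightarrow> (real^'m) set set" where
  "cover0 n kl b = prod_cells (Ints_i n kl b)"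

definition cover_full :: "('m::finite \<Rightarrow> nat) \<Rightarrow> ('m \<Rightarrow> real) \<Rightarrow> ('m \<Rightarrow> real) \<Rightarrow> (real^'m) set set" where
  "cover_full n kl b = prod_cells (Ints_bar_i n kl b)"

text \<open>G_0. For L = {} the maximum over the empty set is -infinity, so the positive part is 0.\<close>
definition G0 :: "('m::finite \<Rightarrow> nat) \<Rightarrow> ('m \<Rightarrow> real) \<Rightarrow> ('m \<Rightarrow> real) \<Rightarrow> (real^'m \<Rightarrow> real) set" where
  "G0 n kl b = {(\<lambda>x. if L = {} then 0
                       else max 0 (Max ((\<lambda>i. max 0 ((x $ i - knot kl b i (j i)) / b i)) ` L)))
               | L j. (\<forall>i\<in>L. j i \<le> n i)}"

definition G1 :: "('m::finite \<Rightarrow> nat) \<Rightarrow> ('m \<Rightarrow> real) \<Rightarrow> ('m \<Rightarrow> real) \<Rightarrow> (real^'m \<Rightarrow> real) set" where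
  "G1 n kl b = G0 n kl b \<union> {(\<lambda>x. x $ i) | i. True}"

definition Gpow :: "('m::finite \<Rightarrow> nat) \<Rightarrow> ('m \<Rightarrow> real) \<Rightarrow> ('m \<Rightarrow> real) \<Rightarrow> real \<Rightarrow> (real^'m \<Rightarrow> real) set" where
  "Gpow n kl b p = G0 n kl b
      \<union> {(\<lambda>x. (max 0 (knot kl b i 0 - x $ i)) powr p) | i. True}
      \<union> {(\<lambda>x. (max 0 (x $ i - knot kl b i (n i))) powr p) | i. True}"

definition Gp :: "('m::finite \<Rightarrow> nat) \<Rightarrow> ('m \<Rightarrow> real) \<Rightarrow> ('m \<Rightarrow> real) \<Rightarrow> real \<Rightarrow> (real^'m \<Rightarrow> real) set" where
  "Gp n kl b p = (if p = 1 then G1 n kl b else Gpow n kl b p)"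

end

theory Submission
  imports Defs
begin

text \<open>
  Every cell is a product of intervals, so its extreme points, faces and extreme directions are
  read off coordinatewise, and two cells meet in a product of common end points and intervals,
  which is a face of both.

  The interpolation function of a grid point \<open>v\<close> is \<open>(min\<^sub>i rise\<^sub>i - max\<^sub>i fall\<^sub>i)\<^sup>+\<close>, where
  \<open>rise\<^sub>i - fall\<^sub>i\<close> is the one-dimensional hat function of the knot \<open>v\<^sub>i\<close>. On each interval the
  hats of its end points form a partition of unity of the form
  \<open>\<Sum>\<^sub>w (min Q rise\<^sub>w - max P fall\<^sub>w)\<^sup>+ = (Q - P)\<^sup>+\<close>, and this identity multiplies out over the
  corners of a cell. The function of \<open>v\<close> is positive at \<open>x\<close> only if \<open>v\<close> is a corner of the cell
  of \<open>x\<close> agreeing with \<open>x\<close> in every coordinate where \<open>x\<close> is an end point, which puts \<open>v\<close> into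
  every face containing \<open>x\<close>. Using \<open>min u m = u + m - max u m\<close> and
  \<open>max (clamp01 s) (clamp01 t) = clamp01 (max s t)\<close>, the function is an affine combination of maxima of
  scaled positive parts of coordinates, i.e. of members of \<open>G0\<close>.

  The extreme directions of a face containing \<open>x\<close> are the outward unit vectors \<open>\<pm>e\<^sub>k\<close> of the
  coordinates in which \<open>x\<close> lies beyond the outermost knots. The projection of \<open>x\<close> onto the box
  spanned by the outermost knots lies in the convex hull of the vertices of the face, so the
  distance in question is at most that to the projection, which is controlled by the \<open>p\<close>-th
  powers of the excesses \<open>(x\<^sub>k - \<kappa>\<^sub>k\<^sub>,\<^sub>n\<^sub>k)\<^sup>+\<close> and \<open>(\<kappa>\<^sub>k\<^sub>,\<^sub>0 - x\<^sub>k)\<^sup>+\<close>.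
\<close>

section \<open>Products of convex sets of reals\<close>

definition cart_prod :: "('m \<Rightarrow> real set) \<Rightarrow> (real^'m) set" where
  "cart_prod I = {x. \<forall>i. x$i \<in> I i}"

definition vec_upd :: "real^'m \<Rightarrow> 'm \<Rightarrow> real \<Rightarrow> real^'m" where
  "vec_upd x i s = (\<chi> j. if j = i then s else x $ j)"

lemma vec_upd_nth [simp]: "vec_upd x i s $ j = (if j = i then s else x $ j)"
  by (simp add: vec_upd_def)

lemma vec_upd_in_cart_prod: "v \<in> cart_prod I \<Longrightarrow> s \<in> I i \<Longrightarrow> vec_upd v i s \<in> cart_prod I"
  by (auto simp: cart_prod_def)

lemma convex_cart_prod: "(\<And>i. convex (I i)) \<Longrightarrow> convex (cart_prod I)"
  unfolding convex_def cart_prod_def by auto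

lemma finite_cart_prod:
  assumes "\<And>i. finite (B i)"
  shows "finite (cart_prod B :: (real^'m::finite) set)"
proof -
  have "cart_prod B \<subseteq> vec_lambda ` PiE UNIV B"
  proof
    fix v :: "real^'m" assume "v \<in> cart_prod B"
    then have "vec_nth v \<in> PiE UNIV B" by (auto simp: cart_prod_def)
    then show "v \<in> vec_lambda ` PiE UNIV B" by (metis image_eqI vec_nth_inverse)
  qed
  moreover have "finite (PiE UNIV B)" using assms by (simp add: finite_PiE)
  ultimately show ?thesis by (meson finite_imageI finite_subset)
qed

lemma open_segment_component:
  fixes p a b :: "real^'m"
  assumes "p \<in> open_segment a b"
  shows "(a$k = b$k \<and> p$k = a$k) \<or> p$k \<in> open_segment (a$k) (b$k)"
proof -
  obtain u where u: "0 < u" "u < 1" "p = (1 - u) *\<^sub>R a + u *\<^sub>R b"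
    using assms by (auto simp: in_segment)
  have pk: "p$k = (1 - u) * a$k + u * b$k" using u by simp
  show ?thesis
  proof (cases "a$k = b$k")
    case True then show ?thesis using pk by (simp add: algebra_simps)
  next
    case False then show ?thesis using pk u by (auto simp: in_segment)
  qed
qed

lemma open_segment_vec_upd:
  assumes "v$i \<in> open_segment s t"
  shows "v \<in> open_segment (vec_upd v i s) (vec_upd v i t)"
proof -
  obtain u where u: "s \<noteq> t" "0 < u" "u < 1" "v$i = (1 - u) * s + u * t"
    using assms by (auto simp: in_segment)
  have "vec_upd v i s \<noteq> vec_upd v i t" using u by (metis vec_upd_nth)
  moreover have "v = (1 - u) *\<^sub>R vec_upd v i s + u *\<^sub>R vec_upd v i t"
    using u by (auto simp: vec_eq_iff algebra_simps)
  ultimately show ?thesis using u by (auto simp: in_segment)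
qed

lemma extreme_point_of_cart_prod:
  "v extreme_point_of cart_prod I \<longleftrightarrow> v \<in> cart_prod I \<and> (\<forall>i. v$i extreme_point_of I i)"
proof (intro iffI conjI allI)
  assume v: "v extreme_point_of cart_prod I"
  then show vI: "v \<in> cart_prod I" by (simp add: extreme_point_of_def)
  fix i
  show "v$i extreme_point_of I i"
    unfolding extreme_point_of_def
  proof (intro conjI ballI notI)
    show "v$i \<in> I i" using vI by (simp add: cart_prod_def)
    fix s t assume "s \<in> I i" "t \<in> I i" "v$i \<in> open_segment s t"
    then show False
      using v vI open_segment_vec_upd vec_upd_in_cart_prod by (metis extreme_point_of_def)
  qed
next
  assume "v \<in> cart_prod I \<and> (\<forall>i. v$i extreme_point_of I i)"
  then have v: "v \<in> cart_prod I" and ext: "\<forall>i. v$i extreme_point_of I i" by auto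
  show "v extreme_point_of cart_prod I"
    unfolding extreme_point_of_def
  proof (intro conjI ballI notI v)
    fix p q assume pq: "p \<in> cart_prod I" "q \<in> cart_prod I" and vpq: "v \<in> open_segment p q"
    then obtain k where "p$k \<noteq> q$k" by (auto simp: vec_eq_iff in_segment)
    then have "v$k \<in> open_segment (p$k) (q$k)" using open_segment_component[OF vpq, of k] by auto
    moreover have "p$k \<in> I k" "q$k \<in> I k" using pq by (auto simp: cart_prod_def)
    ultimately show False using ext by (auto simp: extreme_point_of_def)
  qed
qed

lemma face_of_cart_prod:
  assumes "\<And>i. J i face_of I i"
  shows "cart_prod J face_of cart_prod I"
  unfolding face_of_def
proof (intro conjI ballI impI)
  show "cart_prod J \<subseteq> cart_prod I"
    using assms face_of_imp_subset by (fastforce simp: cart_prod_def)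
  show "convex (cart_prod J)"
    using assms face_of_imp_convex by (intro convex_cart_prod) blast
  fix a c x assume a: "a \<in> cart_prod I" and c: "c \<in> cart_prod I" and x: "x \<in> cart_prod J"
    and seg: "x \<in> open_segment a c"
  have "a$k \<in> J k \<and> c$k \<in> J k" for k
  proof -
    have "a$k \<in> I k" "c$k \<in> I k" "x$k \<in> J k" using a c x by (auto simp: cart_prod_def)
    then show ?thesis using open_segment_component[OF seg, of k] face_ofD[OF assms[of k]] by auto
  qed
  then show "a \<in> cart_prod J" "c \<in> cart_prod J" by (auto simp: cart_prod_def)
qed

lemma interior_if_not_extreme_point_real:
  fixes S :: "real set"
  assumes "convex S" "t \<in> S" "\<not> t extreme_point_of S"
  shows "t \<in> interior S"
proof -
  obtain a c where ac: "a \<in> S" "c \<in> S" "t \<in> open_segment a c"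
    using assms by (auto simp: extreme_point_of_def)
  have "open_segment a c \<subseteq> S"
    using assms(1) ac segment_open_subset_closed closed_segment_subset by blast
  moreover have "open (open_segment a c)" by (simp add: open_segment_eq_real_ivl)
  ultimately show ?thesis using ac(3) interior_maximal interior_open by blast
qed

lemma extreme_point_of_least_real:
  fixes S :: "real set"
  shows "t \<in> S \<Longrightarrow> (\<And>s. s \<in> S \<Longrightarrow> t \<le> s) \<Longrightarrow> t extreme_point_of S"
  using extreme_point_of_Int_supporting_hyperplane_ge[of S 1 t t] by auto

lemma extreme_point_of_greatest_real:
  fixes S :: "real set"
  shows "t \<in> S \<Longrightarrow> (\<And>s. s \<in> S \<Longrightarrow> s \<le> t) \<Longrightarrow> t extreme_point_of S"
  using extreme_point_of_Int_supporting_hyperplane_le[of S 1 t t] by auto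

lemma cart_prod_nbhd_of_nonextreme:
  assumes conv: "\<And>i. convex (I i)" and x: "x \<in> cart_prod (I :: 'm::finite \<Rightarrow> real set)"
  obtains d where "d > 0"
    "\<And>z. (\<And>i. x$i extreme_point_of I i \<Longrightarrow> z$i = x$i) \<Longrightarrow> (\<And>i. \<bar>z$i - x$i\<bar> < d)
          \<Longrightarrow> z \<in> cart_prod I"
proof -
  have "\<exists>d>0. \<not> x$i extreme_point_of I i \<longrightarrow> ball (x$i) d \<subseteq> I i" for i
  proof (cases "x$i extreme_point_of I i")
    case False
    moreover have "x$i \<in> I i" using x by (simp add: cart_prod_def)
    ultimately show ?thesis
      using interior_if_not_extreme_point_real[OF conv] by (auto simp: mem_interior)
  qed (use zero_less_one in blast)
  then obtain d where d: "\<And>i. d i > 0" "\<And>i. \<not> x$i extreme_point_of I i \<Longrightarrow> ball (x$i) (d i) \<subseteq> I i"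
    by metis
  show ?thesis
  proof
    show "Min (range d) > 0" using d(1) by simp
    fix z assume same: "\<And>i. x$i extreme_point_of I i \<Longrightarrow> z$i = x$i"
      and close: "\<And>i. \<bar>z$i - x$i\<bar> < Min (range d)"
    have "z$i \<in> I i" for i
    proof (cases "x$i extreme_point_of I i")
      case True then show ?thesis using same x by (simp add: cart_prod_def)
    next
      case False
      have "\<bar>z$i - x$i\<bar> < d i" using close[of i] Min_le[of "range d" "d i"] by simp
      then show ?thesis using d(2)[OF False] by (auto simp: dist_real_def)
    qed
    then show "z \<in> cart_prod I" by (simp add: cart_prod_def)
  qed
qed

text \<open>Prolonging the segment from \<open>y\<close> slightly beyond \<open>x\<close> stays inside the product, so \<open>x\<close> lies
  in an open segment of the product with end point \<open>y\<close>.\<close>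
lemma face_of_cart_prod_contains:
  fixes F :: "(real^'m::finite) set"
  assumes F: "F face_of cart_prod I" and conv: "\<And>i. convex (I i)"
    and x: "x \<in> F" and y: "y \<in> cart_prod I"
    and same: "\<And>i. x$i extreme_point_of I i \<Longrightarrow> y$i = x$i"
  shows "y \<in> F"
proof (cases "y = x")
  case False
  have xI: "x \<in> cart_prod I" using F x face_of_imp_subset by blast
  obtain d where d: "d > 0"
    and nbhd: "\<And>z. (\<And>i. x$i extreme_point_of I i \<Longrightarrow> z$i = x$i) \<Longrightarrow> (\<And>i. \<bar>z$i - x$i\<bar> < d)
                 \<Longrightarrow> z \<in> cart_prod I"
    using cart_prod_nbhd_of_nonextreme[of I, OF conv xI] by blast
  define e where "e = d / (norm (x - y) + 1)"
  have e: "e > 0" "e * norm (x - y) < d"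
    using d by (auto simp: e_def field_simps add_pos_nonneg)
  define y' where "y' = x + e *\<^sub>R (x - y)"
  have "y' \<in> cart_prod I"
  proof (rule nbhd)
    fix i
    show "y'$i = x$i" if "x$i extreme_point_of I i" using same[OF that] by (simp add: y'_def)
    have "\<bar>x$i - y$i\<bar> \<le> norm (x - y)" using component_le_norm_cart[of "x - y" i] by simp
    then have "e * \<bar>x$i - y$i\<bar> < d" using e by (meson le_less_trans mult_left_mono less_imp_le)
    then show "\<bar>y'$i - x$i\<bar> < d" using e by (simp add: y'_def abs_mult)
  qed
  moreover have "x \<in> open_segment y y'"
  proof -
    have "x = (1 - 1 / (1 + e)) *\<^sub>R y + (1 / (1 + e)) *\<^sub>R y'"
      using e by (simp add: y'_def field_simps scaleR_add_right scaleR_diff_right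
                     flip: scaleR_add_left scaleR_diff_left)
    moreover have "y \<noteq> y'"
    proof
      assume "y = y'"
      then have "(1 + e) *\<^sub>R (x - y) = 0" by (simp add: y'_def algebra_simps)
      then show False using False e by simp
    qed
    ultimately show ?thesis using e unfolding in_segment by (intro conjI exI[of _ "1 / (1 + e)"]) auto
  qed
  ultimately show ?thesis using face_ofD[OF F _ y] x by blast
qed (use x in simp)

lemma halfline_face_of_cart_prod:
  fixes w :: "real^'m::finite"
  assumes w: "w \<in> cart_prod I" and ext: "\<And>k. k \<noteq> i \<Longrightarrow> w$k extreme_point_of I k"
    and ray: "I i = (\<lambda>t. w$i + t * d) ` {0..}"
  shows "{w + t *\<^sub>R axis i d | t. t \<ge> 0} face_of cart_prod I"
proof -
  have "{w + t *\<^sub>R axis i d | t. t \<ge> 0} = cart_prod (\<lambda>k. if k = i then I i else {w$k})"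
  proof (intro equalityI subsetI)
    fix z assume "z \<in> {w + t *\<^sub>R axis i d | t. t \<ge> 0}"
    then show "z \<in> cart_prod (\<lambda>k. if k = i then I i else {w$k})"
      by (auto simp: cart_prod_def ray axis_def mult.commute)
  next
    fix z assume "z \<in> cart_prod (\<lambda>k. if k = i then I i else {w$k})"
    then have zk: "z$k \<in> (if k = i then I i else {w$k})" for k by (simp add: cart_prod_def)
    obtain t where "t \<ge> 0" "z$i = w$i + t * d" using zk[of i] by (auto simp: ray)
    moreover have "z$k = w$k" if "k \<noteq> i" for k using zk[of k] that by simp
    ultimately have "z = w + t *\<^sub>R axis i d \<and> t \<ge> 0" by (auto simp: vec_eq_iff axis_def mult.commute)
    then show "z \<in> {w + t *\<^sub>R axis i d | t. t \<ge> 0}" by blast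
  qed
  moreover have "convex (I i)"
    using convex_affinity[OF convex_real_interval(1), of "w$i" d] by (simp add: ray mult.commute)
  then have "(if k = i then I i else {w$k}) face_of I k" for k
    using ext[of k] by (auto simp: face_of_refl face_of_singleton)
  ultimately show ?thesis by (simp add: face_of_cart_prod)
qed

lemma halfline_face_of_cart_prod_direction:
  fixes x0 z :: "real^'m"
  assumes H: "{x0 + t *\<^sub>R z | t. t \<ge> 0} face_of cart_prod I"
    and zi: "z$i \<noteq> 0" and zk: "z$k \<noteq> 0"
  shows "i = k"
proof (rule ccontr)
  assume ik: "i \<noteq> k"
  let ?H = "{x0 + t *\<^sub>R z | t. t \<ge> 0}"
  have in_prod: "x0 + t *\<^sub>R z \<in> cart_prod I" if "t \<ge> 0" for t
    using face_of_imp_subset[OF H] that by blast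
  define p where "p = x0 + z"
  define a where "a = vec_upd p i (x0$i + 1/2 * z$i)"
  define c where "c = vec_upd p i (x0$i + 3/2 * z$i)"
  have "a \<in> cart_prod I" unfolding a_def
    using in_prod[of 1] in_prod[of "1/2"] by (intro vec_upd_in_cart_prod) (auto simp: p_def cart_prod_def)
  moreover have "c \<in> cart_prod I" unfolding c_def
    using in_prod[of 1] in_prod[of "3/2"] by (intro vec_upd_in_cart_prod) (auto simp: p_def cart_prod_def)
  moreover have "p \<in> open_segment a c"
  proof -
    have "p$i \<in> open_segment (x0$i + 1/2 * z$i) (x0$i + 3/2 * z$i)"
      using zi unfolding in_segment by (intro conjI exI[of _ "1/2"]) (auto simp: p_def algebra_simps)
    then show ?thesis unfolding a_def c_def by (rule open_segment_vec_upd)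
  qed
  moreover have "p \<in> ?H" unfolding p_def by (intro CollectI exI[of _ 1]) auto
  ultimately have "c \<in> ?H" using face_ofD[OF H] by blast
  then obtain t where t: "c = x0 + t *\<^sub>R z" by auto
  have "c$k = p$k" using ik by (simp add: c_def)
  then have "t = 1" using t zk by (simp add: p_def)
  moreover have "c$i = x0$i + 3/2 * z$i" by (simp add: c_def)
  ultimately show False using t zi by simp
qed

lemma norm_axis_real: "norm (axis i (t::real) :: real^'m) = \<bar>t\<bar>"
proof -
  have "axis i t = t *\<^sub>R (axis i 1 :: real^'m)" by (simp add: vec_eq_iff axis_def)
  then show ?thesis by simp
qed

text \<open>Extreme directions are normalised to unit length in \<^const>\<open>Dset\<close>, so the only
  candidates in a product are the signed unit vectors.\<close>
lemma Dset_face_of_cart_prod: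
  fixes F :: "(real^'m) set"
  assumes F: "F face_of cart_prod I"
  shows "Dset F \<subseteq> range (\<lambda>i. axis i (1::real)) \<union> range (\<lambda>i. axis i (-1))"
proof
  fix z :: "real^'m" assume "z \<in> Dset F"
  then obtain x0 where z1: "norm z = 1" and H: "{x0 + t *\<^sub>R z | t. t \<ge> 0} face_of F"
    by (auto simp: Dset_def)
  have H': "{x0 + t *\<^sub>R z | t. t \<ge> 0} face_of cart_prod I" using face_of_trans[OF H F] .
  have "z \<noteq> 0" using z1 by auto
  then obtain i where zi: "z$i \<noteq> 0" by (auto simp: vec_eq_iff)
  have "z$k = 0" if "k \<noteq> i" for k
    using halfline_face_of_cart_prod_direction[OF H' zi, of k] that by blast
  then have ze: "z = axis i (z$i)" by (auto simp: vec_eq_iff axis_def)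
  then have "\<bar>z$i\<bar> = 1" using z1 norm_axis_real[of i "z$i"] by simp
  then have "z$i = 1 \<or> z$i = -1" by auto
  then show "z \<in> range (\<lambda>i. axis i (1::real)) \<union> range (\<lambda>i. axis i (-1))" using ze by auto
qed

lemma cart_prod_vec_upd_nth:
  "v \<in> cart_prod (\<lambda>i. if i \<in> K then A i else {vec_upd w0 k w $ i}) \<Longrightarrow> k \<notin> K \<Longrightarrow> v$k = w"
  by (auto simp: cart_prod_def dest: spec[of _ k])

lemma cart_prod_insert_eq_UN:
  assumes k: "k \<notin> K"
  shows "cart_prod (\<lambda>i. if i \<in> insert k K then A i else {w0$i})
       = (\<Union>w\<in>A k. cart_prod (\<lambda>i. if i \<in> K then A i else {vec_upd w0 k w $ i}))"
proof (intro equalityI subsetI)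
  fix v assume v: "v \<in> cart_prod (\<lambda>i. if i \<in> insert k K then A i else {w0$i})"
  have "v$i \<in> (if i \<in> K then A i else {vec_upd w0 k (v$k) $ i})" for i
    using v[unfolded cart_prod_def, THEN CollectD, THEN spec, of i] k by (cases "i = k") auto
  then have "v \<in> cart_prod (\<lambda>i. if i \<in> K then A i else {vec_upd w0 k (v$k) $ i})"
    by (simp add: cart_prod_def)
  moreover have "v$k \<in> A k" using v by (auto simp: cart_prod_def dest: spec[of _ k])
  ultimately show "v \<in> (\<Union>w\<in>A k. cart_prod (\<lambda>i. if i \<in> K then A i else {vec_upd w0 k w $ i}))"
    by blast
next
  fix v assume "v \<in> (\<Union>w\<in>A k. cart_prod (\<lambda>i. if i \<in> K then A i else {vec_upd w0 k w $ i}))"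
  then obtain w where w: "w \<in> A k" and vw: "v \<in> cart_prod (\<lambda>i. if i \<in> K then A i else {vec_upd w0 k w $ i})"
    by blast
  have "v$i \<in> (if i \<in> insert k K then A i else {w0$i})" for i
    using vw[unfolded cart_prod_def, THEN CollectD, THEN spec, of i] cart_prod_vec_upd_nth[OF vw k] w k
    by (cases "i = k") auto
  then show "v \<in> cart_prod (\<lambda>i. if i \<in> insert k K then A i else {w0$i})"
    by (simp add: cart_prod_def)
qed

definition Min_with :: "real \<Rightarrow> 'a set \<Rightarrow> ('a \<Rightarrow> real) \<Rightarrow> real" where
  "Min_with Q K f = Min (insert Q (f ` K))"

definition Max_with :: "real \<Rightarrow> 'a set \<Rightarrow> ('a \<Rightarrow> real) \<Rightarrow> real" where
  "Max_with P K f = Max (insert P (f ` K))"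

lemma Min_with_empty [simp]: "Min_with Q {} f = Q"
  by (simp add: Min_with_def)

lemma Max_with_empty [simp]: "Max_with P {} f = P"
  by (simp add: Max_with_def)

lemma Min_with_insert: "finite K \<Longrightarrow> Min_with Q (insert k K) f = Min_with (min Q (f k)) K f"
  by (cases "K = {}") (simp_all add: Min_with_def insert_commute min.assoc)

lemma Max_with_insert: "finite K \<Longrightarrow> Max_with P (insert k K) f = Max_with (max P (f k)) K f"
  by (cases "K = {}") (simp_all add: Max_with_def insert_commute max.assoc)

lemma Min_with_UNIV:
  fixes f :: "'a::finite \<Rightarrow> real"
  assumes "\<And>i. f i \<le> Q" shows "Min_with Q UNIV f = Min (range f)"
proof -
  have "Min (range f) \<le> f undefined" by simp
  then have "Min (range f) \<le> Q" using assms[of undefined] by linarith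
  then show ?thesis by (simp add: Min_with_def)
qed

lemma Max_with_UNIV:
  fixes f :: "'a::finite \<Rightarrow> real"
  assumes "\<And>i. P \<le> f i" shows "Max_with P UNIV f = Max (range f)"
proof -
  have "f undefined \<le> Max (range f)" by simp
  then have "P \<le> Max (range f)" using assms[of undefined] by linarith
  then show ?thesis by (simp add: Max_with_def)
qed

lemma max_Min_with: "finite K \<Longrightarrow> max s (Min_with Q K f) = Min_with (max s Q) K (\<lambda>i. max s (f i))"
proof (induction K arbitrary: Q rule: finite_induct)
  case (insert k K)
  have "max s (min Q (f k)) = min (max s Q) (max s (f k))" by (auto simp: max_def min_def)
  then show ?case using insert by (simp add: Min_with_insert)
qed simp

lemma min_Min_with: "finite K \<Longrightarrow> min s (Min_with Q K f) = Min_with (min s Q) K f"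
  by (induction K arbitrary: Q rule: finite_induct) (simp_all add: Min_with_insert min.assoc)

text \<open>Induction over \<open>K\<close>: splitting the product along a new coordinate \<open>k\<close> reduces the sum to the
  one-dimensional identity \<open>tile\<close> for \<open>k\<close>, with \<open>Q\<close> and \<open>P\<close> updated by the values at \<open>k\<close>.\<close>
lemma cart_prod_tiling:
  fixes A :: "'m::finite \<Rightarrow> real set" and q p :: "'m \<Rightarrow> real \<Rightarrow> real"
  assumes fin: "\<And>i. finite (A i)"
    and tile: "\<And>i P Q. 0 \<le> P \<Longrightarrow> Q \<le> 1 \<Longrightarrow>
        (\<Sum>w\<in>A i. max 0 (min Q (q i w) - max P (p i w))) = max 0 (Q - P)"
    and "finite K" "0 \<le> P" "Q \<le> 1"
  shows "(\<Sum>v\<in>cart_prod (\<lambda>i. if i \<in> K then A i else {w0$i}).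
           max 0 (Min_with Q K (\<lambda>i. q i (v$i)) - Max_with P K (\<lambda>i. p i (v$i)))) = max 0 (Q - P)"
  using assms(3-)
proof (induction K arbitrary: w0 P Q rule: finite_induct)
  case empty
  have "cart_prod (\<lambda>i. if i \<in> {} then A i else {w0$i}) = {w0}"
    by (auto simp: cart_prod_def vec_eq_iff)
  then show ?case by simp
next
  case (insert k K)
  let ?V = "\<lambda>w. cart_prod (\<lambda>i. if i \<in> K then A i else {vec_upd w0 k w $ i})"
  let ?g = "\<lambda>v. max 0 (Min_with Q (insert k K) (\<lambda>i. q i (v$i)) - Max_with P (insert k K) (\<lambda>i. p i (v$i)))"
  have V_k: "v$k = w" if "v \<in> ?V w" for v w
    using that insert.hyps(2) by (rule cart_prod_vec_upd_nth)
  have inner: "(\<Sum>v\<in>?V w. ?g v) = max 0 (min Q (q k w) - max P (p k w))" for w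
  proof -
    have "(\<Sum>v\<in>?V w. ?g v) = (\<Sum>v\<in>?V w.
        max 0 (Min_with (min Q (q k w)) K (\<lambda>i. q i (v$i)) - Max_with (max P (p k w)) K (\<lambda>i. p i (v$i))))"
    proof (rule sum.cong[OF refl])
      fix v assume "v \<in> ?V w"
      then have "v$k = w" by (rule V_k)
      then show "?g v = max 0 (Min_with (min Q (q k w)) K (\<lambda>i. q i (v$i))
                              - Max_with (max P (p k w)) K (\<lambda>i. p i (v$i)))"
        using insert.hyps(1) by (simp add: Min_with_insert Max_with_insert)
    qed
    also have "\<dots> = max 0 (min Q (q k w) - max P (p k w))"
      using insert.prems by (intro insert.IH) auto
    finally show ?thesis .
  qed
  have "(\<Sum>v\<in>cart_prod (\<lambda>i. if i \<in> insert k K then A i else {w0$i}). ?g v)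
      = (\<Sum>w\<in>A k. \<Sum>v\<in>?V w. ?g v)"
    unfolding cart_prod_insert_eq_UN[OF insert.hyps(2)]
  proof (rule sum.UNION_disjoint)
    show "\<forall>w\<in>A k. finite (?V w)" using fin by (auto intro!: finite_cart_prod)
    show "\<forall>w\<in>A k. \<forall>w'\<in>A k. w \<noteq> w' \<longrightarrow> ?V w \<inter> ?V w' = {}"
      using V_k by blast
  qed (rule fin)
  also have "\<dots> = (\<Sum>w\<in>A k. max 0 (min Q (q k w) - max P (p k w)))" using inner by simp
  also have "\<dots> = max 0 (Q - P)" using insert.prems by (intro tile) auto
  finally show ?case .
qed

lemma span1_const: "(\<lambda>x. c) \<in> span1 G"
  unfolding span1_def by (intro CollectI exI[of _ c] exI[of _ 0]) auto

lemma span1_superset: "f \<in> G \<Longrightarrow> f \<in> span1 G"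
  unfolding span1_def
  by (intro CollectI exI[of _ 0] exI[of _ 1] exI[of _ "\<lambda>_. 1"] exI[of _ "\<lambda>_. f"]) auto

lemma span1_mono: "G \<subseteq> G' \<Longrightarrow> span1 G \<subseteq> span1 G'"
  unfolding span1_def by blast

lemma sum_lessThan_add:
  fixes f :: "nat \<Rightarrow> 'a::comm_monoid_add"
  shows "(\<Sum>j<k1 + k2. f j) = (\<Sum>j<k1. f j) + (\<Sum>j<k2. f (k1 + j))"
  by (induction k2) (auto simp: add.assoc)

lemma span1_add:
  assumes "f \<in> span1 G" "g \<in> span1 G"
  shows "(\<lambda>x. f x + g x) \<in> span1 G"
proof -
  obtain y1 k1 c1 g1 where 1: "\<forall>j<(k1::nat). g1 j \<in> G" "f = (\<lambda>x. y1 + (\<Sum>j<k1. c1 j * g1 j x))"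
    using assms(1) unfolding span1_def by (auto simp only: mem_Collect_eq)
  obtain y2 k2 c2 g2 where 2: "\<forall>j<(k2::nat). g2 j \<in> G" "g = (\<lambda>x. y2 + (\<Sum>j<k2. c2 j * g2 j x))"
    using assms(2) unfolding span1_def by (auto simp only: mem_Collect_eq)
  define c where "c j = (if j < k1 then c1 j else c2 (j - k1))" for j
  define gs where "gs j = (if j < k1 then g1 j else g2 (j - k1))" for j
  have "\<forall>j<k1 + k2. gs j \<in> G" using 1 2 by (auto simp: gs_def)
  moreover have "(\<lambda>x. f x + g x) = (\<lambda>x. (y1 + y2) + (\<Sum>j<k1 + k2. c j * gs j x))"
    unfolding 1 2 sum_lessThan_add by (simp add: c_def gs_def ac_simps)
  ultimately show ?thesis unfolding span1_def by blast
qed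

lemma span1_cmult:
  assumes "f \<in> span1 G" shows "(\<lambda>x. a * f x) \<in> span1 G"
proof -
  obtain y k c g where g: "\<forall>j<(k::nat). g j \<in> G" "f = (\<lambda>x. y + (\<Sum>j<k. c j * g j x))"
    using assms unfolding span1_def by (auto simp only: mem_Collect_eq)
  have "(\<lambda>x. a * f x) = (\<lambda>x. a * y + (\<Sum>j<k. (a * c j) * g j x))"
    unfolding g(2) by (simp add: distrib_left sum_distrib_left mult.assoc)
  then show ?thesis unfolding span1_def using g(1)
    by (intro CollectI exI[of _ "a * y"] exI[of _ k] exI[of _ "\<lambda>j. a * c j"] exI[of _ g]) simp
qed

lemma span1_diff:
  assumes "f \<in> span1 G" "g \<in> span1 G" shows "(\<lambda>x. f x - g x) \<in> span1 G"
  using span1_add[OF assms(1) span1_cmult[OF assms(2), of "-1"]] by simp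

lemma span1_sum:
  assumes "finite I" "\<And>i. i \<in> I \<Longrightarrow> f i \<in> span1 G"
  shows "(\<lambda>x. \<Sum>i\<in>I. f i x) \<in> span1 G"
  using assms
proof (induction I rule: finite_induct)
  case empty then show ?case using span1_const[of 0] by simp
next
  case (insert i I)
  then show ?case using span1_add[of "f i" G "\<lambda>x. \<Sum>i\<in>I. f i x"] by simp
qed

lemma is_norm_zero: "is_norm N \<Longrightarrow> N 0 = 0"
  by (simp add: is_norm_def)

lemma is_norm_scaleR: "is_norm N \<Longrightarrow> N (c *\<^sub>R x) = \<bar>c\<bar> * N x"
  by (simp add: is_norm_def)

lemma is_norm_triangle: "is_norm N \<Longrightarrow> N (x + y) \<le> N x + N y"
  by (simp add: is_norm_def)

lemma is_norm_nonneg: assumes "is_norm N" shows "0 \<le> N x"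
proof -
  have "N (x + (-1) *\<^sub>R x) \<le> N x + N ((-1) *\<^sub>R x)" by (rule is_norm_triangle[OF assms])
  then show ?thesis using is_norm_zero[OF assms] is_norm_scaleR[OF assms, of "-1" x] by simp
qed

lemma is_norm_sum_le:
  assumes "is_norm N" "finite A" shows "N (\<Sum>k\<in>A. f k) \<le> (\<Sum>k\<in>A. N (f k))"
  using assms(2)
proof (induction A rule: finite_induct)
  case (insert a A)
  then show ?case using is_norm_triangle[OF assms(1), of "f a" "\<Sum>k\<in>A. f k"] by simp
qed (simp add: is_norm_zero[OF assms(1)])

lemma is_norm_powr_le_cart:
  fixes N :: "real^'m \<Rightarrow> real"
  assumes N: "is_norm N" and p: "0 \<le> p"
  shows "N y powr p \<le> (\<Sum>k\<in>UNIV. N (axis k 1)) powr p * (\<Sum>k\<in>UNIV. \<bar>y$k\<bar> powr p)"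
proof -
  define S where "S = (\<Sum>k\<in>UNIV. N (axis k (1::real)))"
  define D where "D = Max (range (\<lambda>k. \<bar>y$k\<bar>))"
  have S0: "0 \<le> S" unfolding S_def using is_norm_nonneg[OF N] by (simp add: sum_nonneg)
  have Dk: "\<bar>y$k\<bar> \<le> D" for k by (simp add: D_def)
  have "D \<in> range (\<lambda>k. \<bar>y$k\<bar>)" unfolding D_def by (rule Max_in) auto
  then obtain k0 where k0: "D = \<bar>y$k0\<bar>" by blast
  have "(\<Sum>k\<in>UNIV. y$k *\<^sub>R axis k 1) = y"
    using basis_expansion[of y] unfolding scalar_mult_eq_scaleR .
  then have "N y \<le> (\<Sum>k\<in>UNIV. N (y$k *\<^sub>R axis k 1))"
    using is_norm_sum_le[OF N finite_class.finite_UNIV, of "\<lambda>k. y$k *\<^sub>R axis k 1"] by simp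
  also have "\<dots> = (\<Sum>k\<in>UNIV. \<bar>y$k\<bar> * N (axis k 1))" by (simp add: is_norm_scaleR[OF N])
  also have "\<dots> \<le> (\<Sum>k\<in>UNIV. D * N (axis k 1))"
    using Dk is_norm_nonneg[OF N] by (intro sum_mono mult_right_mono) auto
  also have "\<dots> = D * S" by (simp add: S_def sum_distrib_left)
  finally have "N y powr p \<le> (D * S) powr p"
    using is_norm_nonneg[OF N] p by (intro powr_mono2) auto
  also have "\<dots> = D powr p * S powr p" using S0 k0 by (simp add: powr_mult)
  also have "\<dots> \<le> (\<Sum>k\<in>UNIV. \<bar>y$k\<bar> powr p) * S powr p"
    unfolding k0 by (intro mult_right_mono member_le_sum) auto
  finally show ?thesis by (simp add: S_def mult.commute)
qed

section \<open>The grid and its cells\<close>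

locale grid =
  fixes n :: "'m::finite \<Rightarrow> nat" and kl b :: "'m \<Rightarrow> real"
  assumes n_pos: "\<And>i. 1 \<le> n i" and b_pos: "\<And>i. 0 < b i"
begin

text \<open>Knots are indexed by integers, and \<open>ivl i c\<close> is the interval between the knots \<open>c\<close> and
  \<open>c + 1\<close>; for \<open>c = -1\<close> and \<open>c = n i\<close> the missing knot is dropped, which yields the two
  unbounded intervals of \<open>Ints_bar_i\<close>.\<close>
definition kappa :: "'m \<Rightarrow> int \<Rightarrow> real" where
  "kappa i a = kl i + of_int a * b i"

definition ivl :: "'m \<Rightarrow> int \<Rightarrow> real set" where
  "ivl i c = {t. (0 \<le> c \<longrightarrow> kappa i c \<le> t) \<and> (c < int (n i) \<longrightarrow> t \<le> kappa i (c + 1))}"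

definition ivl_ends :: "'m \<Rightarrow> int \<Rightarrow> real set" where
  "ivl_ends i c = (if 0 \<le> c then {kappa i c} else {}) \<union> (if c < int (n i) then {kappa i (c + 1)} else {})"

definition cell :: "('m \<Rightarrow> int) \<Rightarrow> (real^'m) set" where
  "cell c = cart_prod (\<lambda>i. ivl i (c i))"

definition corners :: "('m \<Rightarrow> int) \<Rightarrow> (real^'m) set" where
  "corners c = cart_prod (\<lambda>i. ivl_ends i (c i))"

definition cell_index :: "('m \<Rightarrow> int) set" where
  "cell_index = {c. \<forall>i. -1 \<le> c i \<and> c i \<le> int (n i)}"

definition bounded_cell_index :: "('m \<Rightarrow> int) set" where
  "bounded_cell_index = {c. \<forall>i. 0 \<le> c i \<and> c i < int (n i)}"

definition grid_points :: "(real^'m) set" where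
  "grid_points = {v. \<forall>i. \<exists>a. 0 \<le> a \<and> a \<le> int (n i) \<and> v$i = kappa i a}"

lemma kappa_less_iff [simp]: "kappa i a < kappa i a' \<longleftrightarrow> a < a'"
  using b_pos[of i] by (simp add: kappa_def)

lemma kappa_le_iff [simp]: "kappa i a \<le> kappa i a' \<longleftrightarrow> a \<le> a'"
  using b_pos[of i] by (simp add: kappa_def)

lemma kappa_eq_iff [simp]: "kappa i a = kappa i a' \<longleftrightarrow> a = a'"
  using b_pos[of i] by (simp add: kappa_def)

lemma knot_eq_kappa: "knot kl b i j = kappa i (int j)"
  by (simp add: knot_def kappa_def)

lemma kappa_le_iff_coord: "kappa i a \<le> t \<longleftrightarrow> of_int a \<le> (t - kl i) / b i"
  using b_pos[of i] by (simp add: kappa_def field_simps)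

lemma le_kappa_iff_coord: "t \<le> kappa i a \<longleftrightarrow> (t - kl i) / b i \<le> of_int a"
  using b_pos[of i] by (simp add: kappa_def field_simps)

lemma kappa_eq_iff_coord: "kappa i a = t \<longleftrightarrow> of_int a = (t - kl i) / b i"
  using b_pos[of i] by (auto simp: kappa_def field_simps)

lemma coord_diff_kappa: "(t - kappa i a) / b i = (t - kl i) / b i - of_int a"
  using b_pos[of i] by (simp add: kappa_def field_simps)

lemma convex_ivl: "convex (ivl i c)"
proof -
  have "ivl i c = (if 0 \<le> c then {kappa i c..} else UNIV) \<inter> (if c < int (n i) then {..kappa i (c + 1)} else UNIV)"
    by (auto simp: ivl_def)
  then show ?thesis by (auto intro!: convex_Int)
qed

lemma ivl_ends_subset: "ivl_ends i c \<subseteq> ivl i c"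
  by (auto simp: ivl_ends_def ivl_def)

lemma extreme_point_of_ivl: "t extreme_point_of ivl i c \<longleftrightarrow> t \<in> ivl_ends i c"
proof
  assume e: "t extreme_point_of ivl i c"
  show "t \<in> ivl_ends i c"
  proof (rule ccontr)
    assume nt: "t \<notin> ivl_ends i c"
    define U where "U = (if 0 \<le> c then {kappa i c<..} else UNIV) \<inter> (if c < int (n i) then {..<kappa i (c + 1)} else UNIV)"
    have "open U" by (auto simp: U_def)
    moreover have "t \<in> U" using e nt by (auto simp: U_def ivl_def ivl_ends_def extreme_point_of_def)
    moreover have "U \<subseteq> ivl i c" by (auto simp: U_def ivl_def)
    ultimately have "t \<in> interior (ivl i c)" by (meson interiorI)
    then show False using extreme_point_not_in_interior[OF e] by simp
  qed
next
  assume "t \<in> ivl_ends i c"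
  then consider "0 \<le> c" "t = kappa i c" | "c < int (n i)" "t = kappa i (c + 1)"
    by (auto simp: ivl_ends_def split: if_splits)
  then show "t extreme_point_of ivl i c"
  proof cases
    case 1 then show ?thesis by (intro extreme_point_of_least_real) (auto simp: ivl_def)
  next
    case 2 then show ?thesis by (intro extreme_point_of_greatest_real) (auto simp: ivl_def)
  qed
qed

lemma Vset_cell: "Vset (cell c) = corners c"
proof -
  have "v extreme_point_of cell c \<longleftrightarrow> v \<in> corners c" for v
    unfolding cell_def extreme_point_of_cart_prod extreme_point_of_ivl
    using ivl_ends_subset by (auto simp: corners_def cart_prod_def)
  then show ?thesis by (auto simp: Vset_def)
qed

lemma finite_corners: "finite (corners c)"
  unfolding corners_def by (rule finite_cart_prod) (simp add: ivl_ends_def)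

lemma corners_subset_cell: "corners c \<subseteq> cell c"
  using ivl_ends_subset by (auto simp: corners_def cell_def cart_prod_def)

lemma ivl_ends_nonempty: "c \<in> cell_index \<Longrightarrow> ivl_ends i (c i) \<noteq> {}"
  using n_pos[of i] by (auto simp: ivl_ends_def cell_index_def)

lemma corners_nonempty:
  assumes "c \<in> cell_index" shows "corners c \<noteq> {}"
proof -
  have "\<forall>i. \<exists>t. t \<in> ivl_ends i (c i)" using ivl_ends_nonempty[OF assms] by blast
  then obtain f where "\<And>i. f i \<in> ivl_ends i (c i)" by metis
  then have "vec_lambda f \<in> corners c" by (simp add: corners_def cart_prod_def)
  then show ?thesis by blast
qed

lemma ivl_ends_bounds:
  assumes "c \<in> cell_index" "t \<in> ivl_ends k (c k)"
  obtains a where "0 \<le> a" "a \<le> int (n k)" "t = kappa k a"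
proof -
  have "-1 \<le> c k" "c k \<le> int (n k)" using assms(1) by (auto simp: cell_index_def)
  then show ?thesis using assms(2) that by (auto simp: ivl_ends_def split: if_splits)
qed

lemma corners_subset_grid_points: "c \<in> cell_index \<Longrightarrow> corners c \<subseteq> grid_points"
  unfolding corners_def grid_points_def cart_prod_def by (blast elim: ivl_ends_bounds)

end

section \<open>The cells form polyhedral covers\<close>

context grid
begin

lemma bounded_cell_index_subset: "bounded_cell_index \<subseteq> cell_index"
proof
  fix c assume c: "c \<in> bounded_cell_index"
  have "-1 \<le> c i \<and> c i \<le> int (n i)" for i
    using c[unfolded bounded_cell_index_def, THEN CollectD, THEN spec, of i] by linarith
  then show "c \<in> cell_index" by (simp add: cell_index_def)
qed

lemma finite_cell_index: "finite cell_index"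
proof -
  have "cell_index = PiE UNIV (\<lambda>i. {-1..int (n i)})"
    by (auto simp: cell_index_def PiE_UNIV_domain Pi_def)
  then show ?thesis by (simp add: finite_PiE)
qed

lemma ivl_bounded: "0 \<le> c \<Longrightarrow> c < int (n i) \<Longrightarrow> ivl i c = {kappa i c .. kappa i (c + 1)}"
  by (auto simp: ivl_def)

lemma Ints_i_eq: "Ints_i n kl b i = ivl i ` {0..<int (n i)}"
proof (intro equalityI subsetI)
  fix I assume "I \<in> Ints_i n kl b i"
  then obtain j where j: "j < n i" "I = {knot kl b i j .. knot kl b i (Suc j)}"
    by (auto simp: Ints_i_def)
  then have "I = ivl i (int j)" by (simp add: ivl_bounded knot_eq_kappa add.commute)
  then show "I \<in> ivl i ` {0..<int (n i)}" using j by auto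
next
  fix I assume "I \<in> ivl i ` {0..<int (n i)}"
  then obtain c where c: "0 \<le> c" "c < int (n i)" "I = ivl i c" by auto
  then have "I = {knot kl b i (nat c) .. knot kl b i (Suc (nat c))}"
    by (simp add: ivl_bounded knot_eq_kappa add.commute)
  then show "I \<in> Ints_i n kl b i" using c by (auto simp: Ints_i_def)
qed

lemma Ints_bar_i_eq: "Ints_bar_i n kl b i = ivl i ` {-1..int (n i)}"
proof -
  have "ivl i (-1) = {..knot kl b i 0}" "ivl i (int (n i)) = {knot kl b i (n i)..}"
    using n_pos[of i] by (auto simp: ivl_def knot_eq_kappa)
  moreover have "{-1..int (n i)} = insert (-1) (insert (int (n i)) {0..<int (n i)})" by auto
  ultimately show ?thesis unfolding Ints_bar_i_def Ints_i_eq by auto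
qed

lemma prod_cells_ivl: "prod_cells (\<lambda>i. ivl i ` A i) = cell ` {c. \<forall>i. c i \<in> A i}"
proof (intro equalityI subsetI)
  fix C assume "C \<in> prod_cells (\<lambda>i. ivl i ` A i)"
  then obtain I where I: "\<forall>i. I i \<in> ivl i ` A i" "C = {x. \<forall>i. x$i \<in> I i}"
    by (auto simp: prod_cells_def)
  then have "\<forall>i. \<exists>c. c \<in> A i \<and> I i = ivl i c" by blast
  then obtain c where c: "\<And>i. c i \<in> A i" "\<And>i. I i = ivl i (c i)" by metis
  then have "C = cell c" using I(2) by (simp add: cell_def cart_prod_def)
  then show "C \<in> cell ` {c. \<forall>i. c i \<in> A i}" using c(1) by blast
next
  fix C assume "C \<in> cell ` {c. \<forall>i. c i \<in> A i}"
  then obtain c where "\<forall>i. c i \<in> A i" "C = cell c" by blast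
  then show "C \<in> prod_cells (\<lambda>i. ivl i ` A i)"
    unfolding prod_cells_def cell_def cart_prod_def by (intro CollectI exI[of _ "\<lambda>i. ivl i (c i)"]) auto
qed

lemma cover0_eq: "cover0 n kl b = cell ` bounded_cell_index"
  unfolding cover0_def Ints_i_eq prod_cells_ivl bounded_cell_index_def by auto

lemma cover_full_eq: "cover_full n kl b = cell ` cell_index"
  unfolding cover_full_def Ints_bar_i_eq prod_cells_ivl cell_index_def by auto

lemma polyhedron_cell: "polyhedron (cell c)"
proof -
  have "cell c = (\<Inter>i. {x. 0 \<le> c i \<longrightarrow> kappa i (c i) \<le> x$i} \<inter> {x. c i < int (n i) \<longrightarrow> x$i \<le> kappa i (c i + 1)})"
    by (auto simp: cell_def cart_prod_def ivl_def)
  moreover have "polyhedron {x::real^'m. 0 \<le> c i \<longrightarrow> kappa i (c i) \<le> x$i}" for i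
  proof (cases "0 \<le> c i")
    case True
    then have "{x::real^'m. 0 \<le> c i \<longrightarrow> kappa i (c i) \<le> x$i} = {x. axis i 1 \<bullet> x \<ge> kappa i (c i)}"
      by (auto simp: inner_axis')
    then show ?thesis by (simp add: polyhedron_halfspace_ge)
  qed simp
  moreover have "polyhedron {x::real^'m. c i < int (n i) \<longrightarrow> x$i \<le> kappa i (c i + 1)}" for i
  proof (cases "c i < int (n i)")
    case True
    then have "{x::real^'m. c i < int (n i) \<longrightarrow> x$i \<le> kappa i (c i + 1)} = {x. axis i 1 \<bullet> x \<le> kappa i (c i + 1)}"
      by (auto simp: inner_axis')
    then show ?thesis by (simp add: polyhedron_halfspace_le)
  qed simp
  ultimately show ?thesis by auto
qed

lemma ivl_Int_ivl:
  assumes "c < c'" "-1 \<le> c" "c' \<le> int (n i)" and "ivl i c \<inter> ivl i c' \<noteq> {}"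
  shows "ivl i c \<inter> ivl i c' = {kappa i (c + 1)}"
    and "kappa i (c + 1) \<in> ivl_ends i c" "kappa i (c + 1) \<in> ivl_ends i c'"
proof -
  have "c < int (n i)" "0 \<le> c'" using assms by linarith+
  obtain t where "t \<in> ivl i c" "t \<in> ivl i c'" using assms(4) by blast
  then have "kappa i c' \<le> t" "t \<le> kappa i (c + 1)"
    using \<open>c < int (n i)\<close> \<open>0 \<le> c'\<close> by (auto simp: ivl_def)
  then have "kappa i c' \<le> kappa i (c + 1)" by linarith
  then have "c' = c + 1" using assms(1) by simp
  then show "ivl i c \<inter> ivl i c' = {kappa i (c + 1)}"
    and "kappa i (c + 1) \<in> ivl_ends i c" "kappa i (c + 1) \<in> ivl_ends i c'"
    using \<open>c < int (n i)\<close> \<open>0 \<le> c'\<close> by (auto simp: ivl_def ivl_ends_def)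
qed

lemma face_of_ivl_Int:
  assumes "-1 \<le> c" "c \<le> int (n i)" "-1 \<le> c'" "c' \<le> int (n i)" and "ivl i c \<inter> ivl i c' \<noteq> {}"
  shows "(ivl i c \<inter> ivl i c') face_of ivl i c"
proof -
  consider "c = c'" | "c < c'" | "c' < c" by linarith
  then show ?thesis
  proof cases
    case 1 then show ?thesis by (simp add: face_of_refl convex_ivl)
  next
    case 2 then show ?thesis
      using ivl_Int_ivl[OF 2 assms(1,4,5)] by (simp add: face_of_singleton extreme_point_of_ivl)
  next
    case 3
    have "ivl i c' \<inter> ivl i c \<noteq> {}" using assms(5) by blast
    then show ?thesis
      using ivl_Int_ivl[OF 3 assms(3,2)] by (simp add: face_of_singleton extreme_point_of_ivl Int_commute)
  qed
qed

lemma face_of_cell_Int: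
  assumes "c1 \<in> cell_index" "c2 \<in> cell_index" and "cell c1 \<inter> cell c2 \<noteq> {}"
  shows "(cell c1 \<inter> cell c2) face_of cell c1"
proof -
  obtain x where x: "x \<in> cell c1" "x \<in> cell c2" using assms(3) by blast
  have "(ivl i (c1 i) \<inter> ivl i (c2 i)) face_of ivl i (c1 i)" for i
  proof (rule face_of_ivl_Int)
    show "ivl i (c1 i) \<inter> ivl i (c2 i) \<noteq> {}" using x by (auto simp: cell_def cart_prod_def)
  qed (use assms in \<open>auto simp: cell_index_def\<close>)
  moreover have "cell c1 \<inter> cell c2 = cart_prod (\<lambda>i. ivl i (c1 i) \<inter> ivl i (c2 i))"
    by (auto simp: cell_def cart_prod_def)
  ultimately show ?thesis by (simp add: cell_def face_of_cart_prod)
qed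

lemma polyhedral_cover_cells:
  assumes S: "S \<subseteq> cell_index" and Y: "Y \<subseteq> \<Union>(cell ` S)"
  shows "polyhedral_cover (cell ` S) Y"
  unfolding polyhedral_cover_def
proof (intro conjI ballI impI)
  show "finite (cell ` S)" using S finite_cell_index by (meson finite_imageI finite_subset)
  show "Y \<subseteq> \<Union>(cell ` S)" by fact
  fix C assume "C \<in> cell ` S"
  then show "polyhedron C" "Vset C \<noteq> {}" using S corners_nonempty by (auto simp: polyhedron_cell Vset_cell)
next
  fix C1 C2 assume "C1 \<in> cell ` S" "C2 \<in> cell ` S" "C1 \<inter> C2 \<noteq> {}"
  then obtain c1 c2 where "c1 \<in> cell_index" "c2 \<in> cell_index" "C1 = cell c1" "C2 = cell c2"
    "cell c1 \<inter> cell c2 \<noteq> {}" using S by blast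
  then show "(C1 \<inter> C2) face_of C1" "(C1 \<inter> C2) face_of C2"
    using face_of_cell_Int[of c1 c2] face_of_cell_Int[of c2 c1] by (auto simp: Int_commute)
qed

lemma ex_ivl_containing: "\<exists>c. -1 \<le> c \<and> c \<le> int (n i) \<and> t \<in> ivl i c"
proof -
  define y where "y = (t - kl i) / b i"
  consider "y < 0" | "of_int (int (n i)) \<le> y" | "0 \<le> y" "y < of_int (int (n i))" by linarith
  then show ?thesis
  proof cases
    case 1 then show ?thesis
      using n_pos[of i] by (intro exI[of _ "-1"]) (auto simp: ivl_def le_kappa_iff_coord y_def)
  next
    case 2 then show ?thesis by (intro exI[of _ "int (n i)"]) (auto simp: ivl_def kappa_le_iff_coord y_def)
  next
    case 3
    then have "0 \<le> \<lfloor>y\<rfloor>" "\<lfloor>y\<rfloor> < int (n i)" by (auto simp: floor_less_iff)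
    then have "-1 \<le> \<lfloor>y\<rfloor>" "\<lfloor>y\<rfloor> \<le> int (n i)" by linarith+
    with \<open>0 \<le> \<lfloor>y\<rfloor>\<close> show ?thesis
      by (intro exI[of _ "\<lfloor>y\<rfloor>"]) (auto simp: ivl_def kappa_le_iff_coord le_kappa_iff_coord y_def)
  qed
qed

lemma ex_bounded_ivl_containing:
  assumes "knot kl b i 0 \<le> t" "t \<le> knot kl b i (n i)"
  shows "\<exists>c. 0 \<le> c \<and> c < int (n i) \<and> t \<in> ivl i c"
proof -
  define y where "y = (t - kl i) / b i"
  have y: "0 \<le> y" "y \<le> of_int (int (n i))"
    using assms by (auto simp: knot_eq_kappa kappa_le_iff_coord le_kappa_iff_coord y_def)
  show ?thesis
  proof (cases "y = of_int (int (n i))")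
    case True
    then show ?thesis using n_pos[of i]
      by (intro exI[of _ "int (n i) - 1"]) (auto simp: ivl_def kappa_le_iff_coord le_kappa_iff_coord y_def)
  next
    case False
    then have "0 \<le> \<lfloor>y\<rfloor>" "\<lfloor>y\<rfloor> < int (n i)" using y by (auto simp: floor_less_iff)
    then show ?thesis
      by (intro exI[of _ "\<lfloor>y\<rfloor>"]) (auto simp: ivl_def kappa_le_iff_coord le_kappa_iff_coord y_def)
  qed
qed

lemma Union_cells: "\<Union>(cell ` cell_index) = UNIV"
proof -
  have "x \<in> \<Union>(cell ` cell_index)" for x :: "real^'m"
  proof -
    have "\<forall>i. \<exists>c. -1 \<le> c \<and> c \<le> int (n i) \<and> x$i \<in> ivl i c" using ex_ivl_containing by blast
    then obtain c where "\<And>i. -1 \<le> c i \<and> c i \<le> int (n i) \<and> x$i \<in> ivl i (c i)" by metis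
    then show ?thesis by (auto simp: cell_index_def cell_def cart_prod_def)
  qed
  then show ?thesis by blast
qed

lemma box_subset_Union_bounded_cells:
  "{x. \<forall>i. x $ i \<in> {knot kl b i 0 .. knot kl b i (n i)}} \<subseteq> \<Union>(cell ` bounded_cell_index)"
proof
  fix x :: "real^'m" assume "x \<in> {x. \<forall>i. x $ i \<in> {knot kl b i 0 .. knot kl b i (n i)}}"
  then have "\<forall>i. \<exists>c. 0 \<le> c \<and> c < int (n i) \<and> x$i \<in> ivl i c" using ex_bounded_ivl_containing by auto
  then obtain c where "\<And>i. 0 \<le> c i \<and> c i < int (n i) \<and> x$i \<in> ivl i (c i)" by metis
  then show "x \<in> \<Union>(cell ` bounded_cell_index)"
    by (auto simp: bounded_cell_index_def cell_def cart_prod_def)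
qed

end

section \<open>Vertex interpolation functions\<close>

context grid
begin

definition clamp01 :: "real \<Rightarrow> real" where
  "clamp01 t = min 1 (max 0 t)"

text \<open>In one coordinate, \<open>rise i w - fall i w\<close> is the piecewise linear hat function of the
  knot \<open>w\<close> (kept constant beyond the outermost knots); \<open>hat\<close> combines the coordinates by taking
  the least rise and the largest fall.\<close>
definition rise :: "'m \<Rightarrow> real \<Rightarrow> real \<Rightarrow> real" where
  "rise i w t = (if w = kappa i 0 then 1 else clamp01 ((t - w) / b i + 1))"

definition fall :: "'m \<Rightarrow> real \<Rightarrow> real \<Rightarrow> real" where
  "fall i w t = (if w = kappa i (int (n i)) then 0 else clamp01 ((t - w) / b i))"

definition hat :: "real^'m \<Rightarrow> real^'m \<Rightarrow> real" where
  "hat v x = max 0 (Min (range (\<lambda>i. rise i (v$i) (x$i))) - Max (range (\<lambda>i. fall i (v$i) (x$i))))"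

lemma clamp01_bounds: "0 \<le> clamp01 t" "clamp01 t \<le> 1"
  by (auto simp: clamp01_def)

lemma rise_le_1: "rise i w t \<le> 1"
  by (simp add: rise_def clamp01_bounds)

lemma fall_nonneg: "0 \<le> fall i w t"
  by (simp add: fall_def clamp01_bounds)

lemma hat_nonneg: "0 \<le> hat v x"
  by (simp add: hat_def)

lemma ivl_ends_tiling:
  assumes c: "-1 \<le> c" "c \<le> int (n i)" and t: "t \<in> ivl i c" and "0 \<le> P" "Q \<le> 1"
  shows "(\<Sum>w\<in>ivl_ends i c. max 0 (min Q (rise i w t) - max P (fall i w t))) = max 0 (Q - P)"
proof -
  define y where "y = (t - kl i) / b i"
  have ty: "0 \<le> c \<Longrightarrow> of_int c \<le> y" "c < int (n i) \<Longrightarrow> y \<le> of_int c + 1"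
    using t by (auto simp: ivl_def y_def kappa_le_iff_coord le_kappa_iff_coord)
  have n1: "int (n i) \<ge> 1" using n_pos[of i] by simp
  consider "c = -1" | "c = int (n i)" | "0 \<le> c" "c < int (n i)" using c by linarith
  then show ?thesis
  proof cases
    case 1
    then have "fall i (kappa i 0) t = 0" "rise i (kappa i 0) t = 1" "ivl_ends i c = {kappa i 0}"
      using ty n1 by (auto simp: fall_def rise_def clamp01_def coord_diff_kappa y_def[symmetric] ivl_ends_def)
    then show ?thesis using assms by simp
  next
    case 2
    then have "rise i (kappa i c) t = 1" "fall i (kappa i c) t = 0" "ivl_ends i c = {kappa i c}"
      using ty n1 by (auto simp: fall_def rise_def clamp01_def coord_diff_kappa y_def[symmetric] ivl_ends_def)
    then show ?thesis using assms by simp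
  next
    case 3
    define u where "u = y - of_int c"
    have u: "0 \<le> u" "u \<le> 1" using ty 3 by (auto simp: u_def)
    have "rise i (kappa i c) t = 1" "fall i (kappa i c) t = u"
      "rise i (kappa i (c + 1)) t = u" "fall i (kappa i (c + 1)) t = 0"
      using u 3 by (auto simp: rise_def fall_def clamp01_def coord_diff_kappa y_def[symmetric] u_def)
    moreover have "ivl_ends i c = {kappa i c, kappa i (c + 1)}" using 3 by (auto simp: ivl_ends_def)
    ultimately have "(\<Sum>w\<in>ivl_ends i c. max 0 (min Q (rise i w t) - max P (fall i w t)))
        = max 0 (min Q 1 - max P u) + max 0 (min Q u - max P 0)" by simp
    also have "\<dots> = max 0 (Q - P)" using u assms by (auto simp: min_def max_def)
    finally show ?thesis .
  qed
qed

lemma sum_hat_corners: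
  assumes "c \<in> cell_index" and "x \<in> cell c"
  shows "(\<Sum>v\<in>corners c. hat v x) = 1"
proof -
  have "(\<Sum>v\<in>cart_prod (\<lambda>i. if i \<in> UNIV then ivl_ends i (c i) else {x$i}).
          max 0 (Min_with 1 UNIV (\<lambda>i. rise i (v$i) (x$i)) - Max_with 0 UNIV (\<lambda>i. fall i (v$i) (x$i))))
        = max 0 (1 - 0)"
    using assms
    by (intro cart_prod_tiling ivl_ends_tiling) (auto simp: ivl_ends_def cell_index_def cell_def cart_prod_def)
  then show ?thesis
    by (simp add: corners_def hat_def Min_with_UNIV Max_with_UNIV rise_le_1 fall_nonneg)
qed

lemma rise_pos_coord: "0 < rise i (kappa i a) t \<Longrightarrow> a \<noteq> 0 \<Longrightarrow> of_int a - 1 < (t - kl i) / b i"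
  by (auto simp: rise_def clamp01_def coord_diff_kappa split: if_splits)

lemma fall_lt_1_coord: "fall i (kappa i a) t < 1 \<Longrightarrow> a \<noteq> int (n i) \<Longrightarrow> (t - kl i) / b i < of_int a + 1"
  by (auto simp: fall_def clamp01_def coord_diff_kappa split: if_splits)

lemma rise_fall_support:
  assumes a: "0 \<le> a" "a \<le> int (n i)" and c: "-1 \<le> c" "c \<le> int (n i)" and t: "t \<in> ivl i c"
    and pos: "0 < rise i (kappa i a) t" "fall i (kappa i a) t < 1"
  shows "kappa i a \<in> ivl_ends i c" and "t \<in> ivl_ends i c \<Longrightarrow> kappa i a = t"
proof -
  define y where "y = (t - kl i) / b i"
  have ty: "0 \<le> c \<Longrightarrow> of_int c \<le> y" "c < int (n i) \<Longrightarrow> y \<le> of_int c + 1"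
    using t by (auto simp: ivl_def y_def kappa_le_iff_coord le_kappa_iff_coord)
  have y_gt: "a \<noteq> 0 \<Longrightarrow> of_int a - 1 < y" using rise_pos_coord[OF pos(1)] by (simp add: y_def)
  have y_lt: "a \<noteq> int (n i) \<Longrightarrow> y < of_int a + 1" using fall_lt_1_coord[OF pos(2)] by (simp add: y_def)
  have "a \<le> c + 1"
  proof (cases "a = 0 \<or> c = int (n i)")
    case False
    then have "of_int a - 1 < y" "y \<le> of_int c + 1" using y_gt ty(2) c by auto
    then have "real_of_int a < real_of_int (c + 2)" by simp
    then show ?thesis by (simp only: of_int_less_iff)
  qed (use a c in auto)
  moreover have "c \<le> a"
  proof (cases "a = int (n i) \<or> c = -1")
    case False
    then have "y < of_int a + 1" "of_int c \<le> y" using y_lt ty(1) c by auto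
    then have "real_of_int c < real_of_int (a + 1)" by simp
    then show ?thesis by (simp only: of_int_less_iff)
  qed (use a c in auto)
  ultimately have ac: "a = c \<or> a = c + 1" by linarith
  then show "kappa i a \<in> ivl_ends i c" using a by (auto simp: ivl_ends_def)
  have y_kappa: "(kappa i d - kl i) / b i = of_int d" for d
    using b_pos[of i] by (simp add: kappa_def)
  assume "t \<in> ivl_ends i c"
  then have "(0 \<le> c \<and> t = kappa i c) \<or> (c < int (n i) \<and> t = kappa i (c + 1))"
    by (simp add: ivl_ends_def split: if_splits)
  then have "y = of_int a"
  proof (elim disjE conjE)
    assume "0 \<le> c" "t = kappa i c"
    then have "y = of_int c" by (simp add: y_def y_kappa)
    moreover have "a \<noteq> c + 1"
    proof
      assume "a = c + 1"
      then show False using y_gt \<open>0 \<le> c\<close> \<open>y = of_int c\<close> by simp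
    qed
    ultimately show ?thesis using ac by auto
  next
    assume "c < int (n i)" "t = kappa i (c + 1)"
    then have "y = of_int c + 1" by (simp add: y_def y_kappa)
    moreover have "a \<noteq> c"
    proof
      assume "a = c"
      then show False using y_lt \<open>c < int (n i)\<close> \<open>y = of_int c + 1\<close> by simp
    qed
    ultimately show ?thesis using ac by auto
  qed
  then show "kappa i a = t" by (simp add: kappa_eq_iff_coord y_def)
qed

lemma hat_pos_imp_corner:
  assumes v: "v \<in> grid_points" and c: "c \<in> cell_index" and x: "x \<in> cell c" and pos: "0 < hat v x"
  shows "v \<in> corners c" and "\<And>i. x$i \<in> ivl_ends i (c i) \<Longrightarrow> v$i = x$i"
proof -
  have each: "v$i \<in> ivl_ends i (c i) \<and> (x$i \<in> ivl_ends i (c i) \<longrightarrow> v$i = x$i)" for i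
  proof -
    have "Max (range (\<lambda>i. fall i (v$i) (x$i))) < Min (range (\<lambda>i. rise i (v$i) (x$i)))"
      using pos by (simp add: hat_def less_max_iff_disj)
    moreover have "Min (range (\<lambda>i. rise i (v$i) (x$i))) \<le> rise i (v$i) (x$i)"
      "fall i (v$i) (x$i) \<le> Max (range (\<lambda>i. fall i (v$i) (x$i)))" by auto
    ultimately have pos_i: "0 < rise i (v$i) (x$i)" "fall i (v$i) (x$i) < 1"
      using rise_le_1[of i "v$i" "x$i"] fall_nonneg[of i "v$i" "x$i"] by linarith+
    obtain a where a: "0 \<le> a" "a \<le> int (n i)" "v$i = kappa i a"
      using v by (auto simp: grid_points_def)
    have "-1 \<le> c i" "c i \<le> int (n i)" using c by (auto simp: cell_index_def)
    moreover have "x$i \<in> ivl i (c i)" using x by (simp add: cell_def cart_prod_def)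
    ultimately show ?thesis using rise_fall_support[OF a(1,2)] pos_i unfolding a(3) by blast
  qed
  then show "v \<in> corners c" by (simp add: corners_def cart_prod_def)
  show "\<And>i. x$i \<in> ivl_ends i (c i) \<Longrightarrow> v$i = x$i" using each by blast
qed

lemma hat_pos_imp_Vset_face:
  assumes c: "c \<in> cell_index" and F: "F face_of cell c" and x: "x \<in> F"
    and v: "v \<in> grid_points" and pos: "0 < hat v x"
  shows "v \<in> Vset F"
proof -
  have xc: "x \<in> cell c" using F x face_of_imp_subset by blast
  have "v \<in> F"
    using F[unfolded cell_def] convex_ivl x
  proof (rule face_of_cart_prod_contains)
    show "v \<in> cart_prod (\<lambda>i. ivl i (c i))"
      using hat_pos_imp_corner(1)[OF v c xc pos] corners_subset_cell by (auto simp: cell_def)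
    show "v$i = x$i" if "x$i extreme_point_of ivl i (c i)" for i
      using hat_pos_imp_corner(2)[OF v c xc pos] that by (simp add: extreme_point_of_ivl)
  qed
  moreover have "v extreme_point_of cell c"
    using hat_pos_imp_corner(1)[OF v c xc pos] Vset_cell by (auto simp: Vset_def)
  ultimately show ?thesis using extreme_point_of_face[OF F] by (auto simp: Vset_def)
qed

lemma Vcov_cells_subset_grid_points: "S \<subseteq> cell_index \<Longrightarrow> Vcov (cell ` S) \<subseteq> grid_points"
  using corners_subset_grid_points by (fastforce simp: Vcov_def Vset_cell)

lemma vertex_interp_set_hat:
  assumes S: "S \<subseteq> cell_index"
  shows "vertex_interp_set (cell ` S) hat"
proof -
  have vanish: "hat v x = 0"
    if F: "F \<in> Faces (cell ` S)" and x: "x \<in> F" and v: "v \<in> Vcov (cell ` S) - Vset F" for F x v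
  proof -
    obtain c where "c \<in> S" "F face_of cell c" using F by (auto simp: Faces_def)
    moreover have "v \<in> grid_points" using v Vcov_cells_subset_grid_points[OF S] by blast
    ultimately have "\<not> 0 < hat v x" using hat_pos_imp_Vset_face S x v by blast
    then show ?thesis using hat_nonneg[of v x] by linarith
  qed
  have sum: "(\<Sum>v\<in>Vset F. hat v x) = 1" if FF: "F \<in> Faces (cell ` S)" and "x \<in> F" for F x
  proof -
    obtain c where "c \<in> S" and F: "F face_of cell c" using FF by (auto simp: Faces_def)
    then have c: "c \<in> cell_index" using S by blast
    have "Vset F \<subseteq> corners c"
      using extreme_point_of_face[OF F] Vset_cell[of c] by (auto simp: Vset_def)
    moreover have "hat v x = 0" if "v \<in> corners c - Vset F" for v
    proof -
      have "v \<in> grid_points" using that corners_subset_grid_points[OF c] by blast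
      then have "\<not> 0 < hat v x" using hat_pos_imp_Vset_face[OF c F \<open>x \<in> F\<close>] that by blast
      then show ?thesis using hat_nonneg[of v x] by linarith
    qed
    ultimately have "(\<Sum>v\<in>Vset F. hat v x) = (\<Sum>v\<in>corners c. hat v x)"
      by (intro sum.mono_neutral_left finite_corners) auto
    also have "\<dots> = 1" using F \<open>x \<in> F\<close> face_of_imp_subset by (intro sum_hat_corners[OF c]) blast
    finally show ?thesis .
  qed
  have delta: "hat v v' = (if v = v' then 1 else 0)"
    if v: "v \<in> Vcov (cell ` S)" and v': "v' \<in> Vcov (cell ` S)" for v v'
  proof -
    obtain c where "c \<in> S" "v' extreme_point_of cell c" using v' by (auto simp: Vcov_def Vset_def)
    then have F: "{v'} \<in> Faces (cell ` S)" by (auto simp: Faces_def face_of_singleton)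
    show ?thesis using sum[OF F] vanish[OF F, of v' v] v by (auto simp: Vset_def)
  qed
  show ?thesis unfolding vertex_interp_set_def using hat_nonneg vanish sum delta by blast
qed

end

section \<open>The interpolation functions lie in the span of \<open>G0\<close>\<close>

context grid
begin

lemma knot_mono: "j \<le> k \<Longrightarrow> knot kl b i j \<le> knot kl b i k"
  using b_pos[of i] by (simp add: knot_def mult_right_mono)

lemma knot_eq_pred_plus: "1 \<le> j \<Longrightarrow> knot kl b i j = knot kl b i (j - 1) + b i"
  by (simp add: knot_def algebra_simps)

text \<open>Within a maximum over several knots of one coordinate only the smallest knot matters,
  so such maxima are members of \<open>G0\<close>.\<close>
lemma max0_Max_in_G0:
  assumes fin: "finite A" and ne: "A \<noteq> {}" and le: "\<And>ik. ik \<in> A \<Longrightarrow> snd ik \<le> n (fst ik)"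
  shows "(\<lambda>x. max 0 (Max ((\<lambda>ik. (x $ fst ik - knot kl b (fst ik) (snd ik)) / b (fst ik)) ` A))) \<in> G0 n kl b"
proof -
  define L where "L = fst ` A"
  define j where "j i = Min (snd ` {ik\<in>A. fst ik = i})" for i
  define z where "z x ik = (x $ fst ik - knot kl b (fst ik) (snd ik)) / b (fst ik)" for x ik
  define h where "h x i = max 0 ((x $ i - knot kl b i (j i)) / b i)" for x i
  have finL: "finite L" "L \<noteq> {}" using fin ne by (auto simp: L_def)
  have j_in: "(i, j i) \<in> A" if "i \<in> L" for i
  proof -
    have "j i \<in> snd ` {ik\<in>A. fst ik = i}"
      unfolding j_def using fin that by (intro Min_in) (auto simp: L_def)
    then show ?thesis by auto
  qed
  have j_le: "j (fst ik) \<le> snd ik" if "ik \<in> A" for ik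
    unfolding j_def using fin that by (intro Min_le) auto
  have "max 0 (Max (h x ` L)) = max 0 (Max (z x ` A))" for x
  proof (rule antisym)
    have "h x i \<le> max 0 (Max (z x ` A))" if "i \<in> L" for i
    proof -
      have "z x (i, j i) \<le> Max (z x ` A)" using fin j_in[OF that] by (intro Max_ge) auto
      then show ?thesis by (simp add: h_def z_def)
    qed
    then show "max 0 (Max (h x ` L)) \<le> max 0 (Max (z x ` A))" using finL by simp
  next
    have "z x ik \<le> Max (h x ` L)" if "ik \<in> A" for ik
    proof -
      have "z x ik \<le> (x $ fst ik - knot kl b (fst ik) (j (fst ik))) / b (fst ik)"
        unfolding z_def using knot_mono[OF j_le[OF that]] b_pos[of "fst ik"]
        by (intro divide_right_mono) auto
      also have "\<dots> \<le> h x (fst ik)" by (simp add: h_def)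
      also have "\<dots> \<le> Max (h x ` L)" using finL that by (intro Max_ge) (auto simp: L_def)
      finally show ?thesis .
    qed
    then have "Max (z x ` A) \<le> Max (h x ` L)" using fin ne by simp
    then show "max 0 (Max (z x ` A)) \<le> max 0 (Max (h x ` L))" by (intro max.mono) auto
  qed
  moreover have "(\<lambda>x. if L = {} then 0 else max 0 (Max (h x ` L))) \<in> G0 n kl b"
    unfolding G0_def h_def using j_in le by fastforce
  ultimately show ?thesis using finL by (simp add: z_def)
qed

text \<open>A pair \<open>(i, k)\<close> stands for the ramp of coordinate \<open>i\<close> rising from \<open>0\<close> at knot \<open>k - 1\<close> to \<open>1\<close> at
  knot \<open>k\<close>; hence \<open>admissible\<close> requires \<open>1 \<le> k\<close>.\<close>
definition ramp_max :: "('m \<times> nat) set \<Rightarrow> real^'m \<Rightarrow> real" where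
  "ramp_max A x = (if A = {} then 0
     else clamp01 (Max ((\<lambda>ik. (x $ fst ik - knot kl b (fst ik) (snd ik - 1)) / b (fst ik)) ` A)))"

definition admissible :: "('m \<times> nat) set \<Rightarrow> bool" where
  "admissible A \<longleftrightarrow> finite A \<and> (\<forall>ik\<in>A. 1 \<le> snd ik \<and> snd ik \<le> n (fst ik))"

lemma ramp_max_bounds: "0 \<le> ramp_max A x" "ramp_max A x \<le> 1"
  by (auto simp: ramp_max_def clamp01_bounds)

lemma max_clamp01: "max (clamp01 s) (clamp01 t) = clamp01 (max s t)"
  by (auto simp: clamp01_def max_def min_def)

lemma max_ramp_max: "finite A \<Longrightarrow> finite B \<Longrightarrow> max (ramp_max A x) (ramp_max B x) = ramp_max (A \<union> B) x"
  using ramp_max_bounds[of A x] ramp_max_bounds[of B x]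
  by (cases "A = {}"; cases "B = {}") (simp_all add: ramp_max_def max_clamp01 Max_Un image_Un)

lemma Max_ramp_max:
  assumes "finite I" "I \<noteq> {}" "\<And>i. finite (P i)"
  shows "Max ((\<lambda>i. ramp_max (P i) x) ` I) = ramp_max (\<Union>i\<in>I. P i) x"
  using assms(1,2) by (induction I rule: finite_ne_induct) (simp_all add: assms(3) max_ramp_max)

text \<open>\<open>clamp01 t = max 0 t - max 0 (t - 1)\<close>, and both maxima are members of \<open>G0\<close>.\<close>
lemma ramp_max_in_span1: assumes "admissible A" shows "ramp_max A \<in> span1 (G0 n kl b)"
proof (cases "A = {}")
  case True
  then show ?thesis using span1_const[of 0] by (simp add: ramp_max_def[abs_def])
next
  case False
  have fin: "finite A" and k: "\<And>ik. ik \<in> A \<Longrightarrow> 1 \<le> snd ik \<and> snd ik \<le> n (fst ik)"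
    using assms by (auto simp: admissible_def)
  define A' where "A' = (\<lambda>ik. (fst ik, snd ik - 1)) ` A"
  define M where "M B x = Max ((\<lambda>ik. (x $ fst ik - knot kl b (fst ik) (snd ik)) / b (fst ik)) ` B)" for B x
  have "snd ik \<le> n (fst ik)" if "ik \<in> A'" for ik
  proof -
    obtain ik0 where "ik0 \<in> A" "ik = (fst ik0, snd ik0 - 1)" using \<open>ik \<in> A'\<close> by (auto simp: A'_def)
    then show ?thesis using k[of ik0] by auto
  qed
  then have "(\<lambda>x. max 0 (M A' x)) \<in> G0 n kl b" "(\<lambda>x. max 0 (M A x)) \<in> G0 n kl b"
    unfolding M_def using fin False k by (auto simp: A'_def intro!: max0_Max_in_G0)
  then have "(\<lambda>x. max 0 (M A' x) - max 0 (M A x)) \<in> span1 (G0 n kl b)"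
    by (intro span1_diff span1_superset)
  moreover have "ramp_max A = (\<lambda>x. max 0 (M A' x) - max 0 (M A x))"
  proof
    fix x
    have "M A x = M A' x - 1"
    proof -
      have "(\<lambda>ik. (x $ fst ik - knot kl b (fst ik) (snd ik)) / b (fst ik)) ` A
          = (\<lambda>ik. (x $ fst ik - knot kl b (fst ik) (snd ik - 1)) / b (fst ik) + (-1)) ` A"
      proof (rule image_cong[OF refl])
        fix ik assume "ik \<in> A"
        then have "knot kl b (fst ik) (snd ik) = knot kl b (fst ik) (snd ik - 1) + b (fst ik)"
          using k by (intro knot_eq_pred_plus) blast
        then show "(x $ fst ik - knot kl b (fst ik) (snd ik)) / b (fst ik)
            = (x $ fst ik - knot kl b (fst ik) (snd ik - 1)) / b (fst ik) + (-1)"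
          using b_pos[of "fst ik"] by (simp add: field_simps)
      qed
      also have "Max \<dots> = Max ((\<lambda>ik. (x $ fst ik - knot kl b (fst ik) (snd ik - 1)) / b (fst ik)) ` A) + (-1)"
        using fin False by (rule Max_add_commute)
      finally show ?thesis by (simp add: M_def A'_def image_image)
    qed
    then show "ramp_max A x = max 0 (M A' x) - max 0 (M A x)"
      using False by (simp add: ramp_max_def clamp01_def M_def A'_def image_image max_def min_def)
  qed
  ultimately show ?thesis by simp
qed

text \<open>Inclusion--exclusion \<open>min u m = u + m - max u m\<close>, where the maximum of a ramp and a
  minimum of ramps is again a minimum of ramps.\<close>
lemma Min_with_ramp_max_in_span1:
  assumes "finite J" "\<And>i. admissible (B i)"
  shows "(\<lambda>x. Min_with 1 J (\<lambda>i. ramp_max (B i) x)) \<in> span1 (G0 n kl b)"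
  using assms
proof (induction J arbitrary: B rule: finite_induct)
  case empty
  then show ?case using span1_const[of 1] by simp
next
  case (insert k J)
  define B' where "B' i = B k \<union> B i" for i
  have "(\<lambda>x. Min_with 1 (insert k J) (\<lambda>i. ramp_max (B i) x))
      = (\<lambda>x. ramp_max (B k) x + Min_with 1 J (\<lambda>i. ramp_max (B i) x) - Min_with 1 J (\<lambda>i. ramp_max (B' i) x))"
  proof
    fix x
    let ?u = "ramp_max (B k) x" and ?m = "Min_with 1 J (\<lambda>i. ramp_max (B i) x)"
    have "Min_with 1 (insert k J) (\<lambda>i. ramp_max (B i) x) = Min_with (min 1 ?u) J (\<lambda>i. ramp_max (B i) x)"
      using insert.hyps by (simp add: Min_with_insert)
    also have "min 1 ?u = min ?u 1" by (rule min.commute)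
    also have "Min_with (min ?u 1) J (\<lambda>i. ramp_max (B i) x) = min ?u ?m"
      by (rule min_Min_with[OF insert.hyps(1), symmetric])
    finally have "Min_with 1 (insert k J) (\<lambda>i. ramp_max (B i) x) = min ?u ?m" .
    moreover have "max ?u ?m = Min_with 1 J (\<lambda>i. ramp_max (B' i) x)"
      using max_Min_with[OF insert.hyps(1), of ?u 1] ramp_max_bounds[of "B k" x] insert.prems
      by (simp add: max_ramp_max B'_def admissible_def)
    moreover have "min ?u ?m = ?u + ?m - max ?u ?m" by (simp add: min_def max_def)
    ultimately show "Min_with 1 (insert k J) (\<lambda>i. ramp_max (B i) x)
        = ramp_max (B k) x + ?m - Min_with 1 J (\<lambda>i. ramp_max (B' i) x)" by simp
  qed
  moreover have "admissible (B' i)" for i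
    using insert.prems[of k] insert.prems[of i] by (auto simp: B'_def admissible_def)
  ultimately show ?case
    using span1_diff[OF span1_add[OF ramp_max_in_span1 insert.IH] insert.IH] insert.prems by simp
qed

lemma rise_knot: "rise i (knot kl b i j) (x$i) = (if j = 0 then 1 else ramp_max {(i, j)} x)"
proof (cases "j = 0")
  case False
  then have "knot kl b i j = knot kl b i (j - 1) + b i" by (intro knot_eq_pred_plus) simp
  then have "(x$i - knot kl b i j) / b i + 1 = (x$i - knot kl b i (j - 1)) / b i"
    using b_pos[of i] by (simp add: field_simps)
  then show ?thesis using False by (simp add: rise_def ramp_max_def knot_eq_kappa)
qed (simp add: rise_def knot_eq_kappa)

lemma fall_knot: "fall i (knot kl b i j) (x$i) = ramp_max (if j = n i then {} else {(i, Suc j)}) x"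
  by (simp add: fall_def ramp_max_def knot_eq_kappa)

text \<open>With \<open>p\<close> the largest fall, \<open>hat v = max p (Min rise) - p\<close>, and \<open>max p\<close> can be pushed
  into the minimum, turning each rise into a ramp maximum.\<close>
lemma hat_in_span1:
  assumes v: "v \<in> grid_points"
  shows "hat v \<in> span1 (G0 n kl b)"
proof -
  have "\<exists>j. j \<le> n i \<and> v$i = knot kl b i j" for i
  proof -
    obtain c where "0 \<le> c" "c \<le> int (n i)" "v$i = kappa i c" using v by (auto simp: grid_points_def)
    then show ?thesis by (intro exI[of _ "nat c"]) (simp add: knot_eq_kappa)
  qed
  then obtain a where a: "\<And>i. a i \<le> n i" "\<And>i. v$i = knot kl b i (a i)" by metis
  define T where "T = {i. a i = 0}"
  define Pi where "Pi i = (if a i = n i then {} else {(i, Suc (a i))})" for i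
  define P where "P = (\<Union>i. Pi i)"
  define B where "B i = (if i \<in> T then P else insert (i, a i) P)" for i
  have "1 \<le> Suc (a i) \<and> Suc (a i) \<le> n i" if "a i \<noteq> n i" for i
    using a(1)[of i] that by simp
  then have admissible_P: "admissible P"
    by (auto simp: admissible_def P_def Pi_def split: if_splits)
  have admissible_B: "admissible (B i)" for i
    using admissible_P a(1)[of i] by (auto simp: admissible_def B_def T_def)
  have "hat v x = Min_with 1 (- T) (\<lambda>i. ramp_max (B i) x) - ramp_max P x" for x
  proof -
    let ?p = "ramp_max P x" and ?r = "\<lambda>i. if i \<in> T then 1 else ramp_max {(i, a i)} x"
    have "Max (range (\<lambda>i. fall i (v$i) (x$i))) = ?p"
      unfolding a(2) fall_knot P_def Pi_def by (rule Max_ramp_max) auto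
    moreover have "Min (range (\<lambda>i. rise i (v$i) (x$i))) = Min_with 1 UNIV ?r"
      unfolding a(2) rise_knot by (subst Min_with_UNIV) (simp_all add: T_def ramp_max_bounds)
    ultimately have "hat v x = max ?p (Min_with 1 UNIV ?r) - ?p"
      by (simp add: hat_def max_def)
    also have "max ?p (Min_with 1 UNIV ?r) = Min_with 1 UNIV (\<lambda>i. max ?p (?r i))"
      using max_Min_with[of UNIV ?p 1 ?r] ramp_max_bounds[of P x] by (simp add: max_absorb2)
    also have "\<dots> = Min_with 1 UNIV (\<lambda>i. if i \<in> T then 1 else ramp_max (B i) x)"
      using admissible_P ramp_max_bounds[of P x]
      by (simp add: if_distrib max_ramp_max admissible_def B_def max_absorb2 cong: if_cong)
    also have "\<dots> = Min_with 1 (- T) (\<lambda>i. ramp_max (B i) x)"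
      unfolding Min_with_def by (rule arg_cong[where f = Min]) auto
    finally show ?thesis .
  qed
  then have "hat v = (\<lambda>x. Min_with 1 (- T) (\<lambda>i. ramp_max (B i) x) - ramp_max P x)" by auto
  then show ?thesis
    using span1_diff[OF Min_with_ramp_max_in_span1[of "- T" B] ramp_max_in_span1[OF admissible_P]]
      admissible_B by simp
qed

end

section \<open>Radial functions\<close>

context grid
begin

lemma ivl_upper_ray: "ivl i (int (n i)) = (\<lambda>t. kappa i (int (n i)) + t * 1) ` {0..}"
proof -
  have "s = kappa i (int (n i)) + (s - kappa i (int (n i))) * 1" for s by simp
  then show ?thesis by (force simp: ivl_def image_iff)
qed

lemma ivl_lower_ray: "ivl i (-1) = (\<lambda>t. kappa i 0 + t * (-1)) ` {0..}"
proof -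
  have "s = kappa i 0 + (kappa i 0 - s) * (-1)" for s by simp
  moreover have "0 < int (n i)" using n_pos[of i] by simp
  ultimately show ?thesis by (force simp: ivl_def image_iff)
qed

lemma ivl_beyond_outer_knot:
  assumes c: "c \<in> cell_index" and t: "t \<in> ivl i (c i)"
    and dir: "(d = 1 \<and> kappa i (int (n i)) < t) \<or> (d = -1 \<and> t < kappa i 0)"
  obtains e where "ivl i (c i) = (\<lambda>s. e + s * d) ` {0..}" "ivl_ends i (c i) = {e}" "t \<noteq> e"
proof -
  have ci: "-1 \<le> c i" "c i \<le> int (n i)" "1 \<le> n i" using c n_pos[of i] by (auto simp: cell_index_def)
  have "c i = (if d = 1 then int (n i) else -1)"
  proof (cases "d = 1")
    case True
    have "\<not> c i < int (n i)"
    proof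
      assume "c i < int (n i)"
      then have "t \<le> kappa i (c i + 1)" "kappa i (c i + 1) \<le> kappa i (int (n i))"
        using t by (auto simp: ivl_def)
      moreover have "kappa i (int (n i)) < t" using dir True by auto
      ultimately show False by linarith
    qed
    then show ?thesis using True ci by simp
  next
    case False
    have "\<not> 0 \<le> c i"
    proof
      assume "0 \<le> c i"
      then have "kappa i (c i) \<le> t" "kappa i 0 \<le> kappa i (c i)" using t by (auto simp: ivl_def)
      moreover have "t < kappa i 0" using dir False by auto
      ultimately show False by linarith
    qed
    then show ?thesis using False ci by simp
  qed
  then show ?thesis
    using that[of "if d = 1 then kappa i (int (n i)) else kappa i 0"] dir ci(3)
    by (auto simp: ivl_upper_ray ivl_lower_ray ivl_ends_def)
qed

lemma corner_agreeing_on_ends: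
  assumes "c \<in> cell_index"
  obtains w where "w \<in> corners c" "\<And>k. x$k \<in> ivl_ends k (c k) \<Longrightarrow> w$k = x$k"
proof
  define w where "w = (\<chi> k. if x$k \<in> ivl_ends k (c k) then x$k else (SOME t. t \<in> ivl_ends k (c k)))"
  have "w$k \<in> ivl_ends k (c k)" for k
    using ivl_ends_nonempty[OF assms, of k] by (auto simp: w_def intro: someI_ex)
  then show "w \<in> corners c" by (simp add: corners_def cart_prod_def)
  show "w$k = x$k" if "x$k \<in> ivl_ends k (c k)" for k using that by (simp add: w_def)
qed

text \<open>The half-line from a suitable corner in direction \<open>\<pm>e\<^sub>i\<close> is a face of the unbounded cell,
  and it lies in \<open>F\<close> because it agrees with \<open>x\<close> wherever \<open>x\<close> is at an end point.\<close>
lemma axis_in_Dset_face: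
  assumes c: "c \<in> cell_index" and F: "F face_of cell c" and x: "x \<in> F"
    and dir: "(d = 1 \<and> kappa i (int (n i)) < x$i) \<or> (d = -1 \<and> x$i < kappa i 0)"
  shows "axis i d \<in> Dset F"
proof -
  have "x$i \<in> ivl i (c i)" using F x face_of_imp_subset by (fastforce simp: cell_def cart_prod_def)
  then obtain e where ray: "ivl i (c i) = (\<lambda>t. e + t * d) ` {0..}"
    and ends: "ivl_ends i (c i) = {e}" and "x$i \<noteq> e"
    using ivl_beyond_outer_knot[OF c _ dir] by blast
  obtain w where w: "w \<in> corners c" and wx: "\<And>k. x$k \<in> ivl_ends k (c k) \<Longrightarrow> w$k = x$k"
    using corner_agreeing_on_ends[OF c] by blast
  have w_ends: "w$k \<in> ivl_ends k (c k)" for k using w by (simp add: corners_def cart_prod_def)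
  let ?H = "{w + t *\<^sub>R axis i d | t. t \<ge> 0}"
  have H_face: "?H face_of cell c"
    unfolding cell_def using w corners_subset_cell[of c]
  proof (intro halfline_face_of_cart_prod)
    show "w$k extreme_point_of ivl k (c k)" for k using w_ends by (simp add: extreme_point_of_ivl)
    show "ivl i (c i) = (\<lambda>t. w$i + t * d) ` {0..}" using ray w_ends[of i] ends by simp
  qed (auto simp: cell_def)
  have H_F: "?H \<subseteq> F"
  proof
    fix y assume y: "y \<in> ?H"
    show "y \<in> F"
      using F[unfolded cell_def] convex_ivl x
    proof (rule face_of_cart_prod_contains)
      show "y \<in> cart_prod (\<lambda>k. ivl k (c k))" using H_face y face_of_imp_subset by (fastforce simp: cell_def)
      show "y$k = x$k" if "x$k extreme_point_of ivl k (c k)" for k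
      proof -
        have "x$k \<in> ivl_ends k (c k)" using that by (simp add: extreme_point_of_ivl)
        moreover have "k \<noteq> i" using calculation ends \<open>x$i \<noteq> e\<close> by auto
        ultimately show ?thesis using y wx by (auto simp: axis_def)
      qed
    qed
  qed
  have "?H face_of F" using face_of_subset[OF H_face H_F] F face_of_imp_subset by blast
  moreover have "w \<in> F" using H_F by (auto intro!: exI[of _ 0])
  moreover have "norm (axis i d) = 1" using dir by (auto simp: norm_axis_real)
  ultimately show ?thesis unfolding Dset_def by blast
qed

definition proj_box :: "real^'m \<Rightarrow> real^'m" where
  "proj_box x = (\<chi> k. min (max (x$k) (kappa k 0)) (kappa k (int (n k))))"

lemma proj_box_in_face:
  assumes c: "c \<in> cell_index" and F: "F face_of cell c" and x: "x \<in> F"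
  shows "proj_box x \<in> F"
  using F[unfolded cell_def] convex_ivl x
proof (rule face_of_cart_prod_contains)
  have "proj_box x $ k \<in> ivl k (c k)" for k
  proof -
    have xk: "x$k \<in> ivl k (c k)" using F x face_of_imp_subset by (fastforce simp: cell_def cart_prod_def)
    have "-1 \<le> c k" "c k \<le> int (n k)" "1 \<le> n k" using c n_pos[of k] by (auto simp: cell_index_def)
    then consider "c k = -1" | "c k = int (n k)" | "0 \<le> c k" "c k < int (n k)" by linarith
    then show ?thesis
    proof cases
      case 1
      then have "x$k \<le> kappa k 0" using xk \<open>1 \<le> n k\<close> by (simp add: ivl_def)
      then have "proj_box x $ k = kappa k 0" by (simp add: proj_box_def)
      then show ?thesis using 1 \<open>1 \<le> n k\<close> by (simp add: ivl_def)
    next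
      case 2
      then have "kappa k (int (n k)) \<le> x$k" using xk by (simp add: ivl_def)
      then have "proj_box x $ k = kappa k (int (n k))" by (simp add: proj_box_def)
      then show ?thesis using 2 by (simp add: ivl_def)
    next
      case 3
      then have "kappa k 0 \<le> kappa k (c k)" "kappa k (c k + 1) \<le> kappa k (int (n k))"
        "kappa k (c k) \<le> x$k" "x$k \<le> kappa k (c k + 1)" using xk by (simp_all add: ivl_def)
      then have "kappa k 0 \<le> x$k" "x$k \<le> kappa k (int (n k))" by linarith+
      then have "proj_box x $ k = x$k" by (simp add: proj_box_def)
      then show ?thesis using xk by simp
    qed
  qed
  then show "proj_box x \<in> cart_prod (\<lambda>k. ivl k (c k))" by (simp add: cart_prod_def)
  fix k assume "x$k extreme_point_of ivl k (c k)"
  then have "x$k \<in> ivl_ends k (c k)" by (simp add: extreme_point_of_ivl)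
  then obtain a where "0 \<le> a" "a \<le> int (n k)" "x$k = kappa k a" by (rule ivl_ends_bounds[OF c])
  then show "proj_box x $ k = x $ k" by (simp add: proj_box_def)
qed

lemma face_of_ivl_Int_box:
  assumes c: "c \<in> cell_index"
  shows "(ivl k (c k) \<inter> {kappa k 0 .. kappa k (int (n k))}) face_of ivl k (c k)"
proof -
  have "-1 \<le> c k" "c k \<le> int (n k)" "1 \<le> n k" using c n_pos[of k] by (auto simp: cell_index_def)
  then consider "c k = -1" | "c k = int (n k)" | "0 \<le> c k" "c k < int (n k)" by linarith
  then show ?thesis
  proof cases
    case 1
    then have "ivl k (c k) \<inter> {kappa k 0 .. kappa k (int (n k))} = {kappa k 0}"
      "kappa k 0 \<in> ivl_ends k (c k)" using \<open>1 \<le> n k\<close> by (auto simp: ivl_def ivl_ends_def)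
    then show ?thesis by (simp add: face_of_singleton extreme_point_of_ivl)
  next
    case 2
    then have "ivl k (c k) \<inter> {kappa k 0 .. kappa k (int (n k))} = {kappa k (int (n k))}"
      "kappa k (int (n k)) \<in> ivl_ends k (c k)" by (auto simp: ivl_def ivl_ends_def)
    then show ?thesis by (simp add: face_of_singleton extreme_point_of_ivl)
  next
    case 3
    then have "kappa k 0 \<le> kappa k (c k)" "kappa k (c k + 1) \<le> kappa k (int (n k))" by simp_all
    have "ivl k (c k) \<subseteq> {kappa k 0 .. kappa k (int (n k))}"
    proof
      fix t assume "t \<in> ivl k (c k)"
      then have "kappa k (c k) \<le> t" "t \<le> kappa k (c k + 1)" using 3 by (simp_all add: ivl_def)
      then have "kappa k 0 \<le> t" "t \<le> kappa k (int (n k))"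
        using \<open>kappa k 0 \<le> kappa k (c k)\<close> \<open>kappa k (c k + 1) \<le> kappa k (int (n k))\<close> by linarith+
      then show "t \<in> {kappa k 0 .. kappa k (int (n k))}" by simp
    qed
    then have "ivl k (c k) \<inter> {kappa k 0 .. kappa k (int (n k))} = ivl k (c k)" by blast
    then show ?thesis by (simp add: face_of_refl convex_ivl)
  qed
qed

lemma face_Int_box_subset_hull:
  assumes c: "c \<in> cell_index" and F: "F face_of cell c"
  shows "F \<inter> cbox (\<chi> k. kappa k 0) (\<chi> k. kappa k (int (n k))) \<subseteq> convex hull (Vset F)"
proof -
  define Box where "Box = cbox (\<chi> k. kappa k 0) (\<chi> k. kappa k (int (n k)) :: real^'m)"
  have "cell c \<inter> Box = cart_prod (\<lambda>k. ivl k (c k) \<inter> {kappa k 0 .. kappa k (int (n k))})"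
    by (auto simp: Box_def mem_box_cart cell_def cart_prod_def)
  then have "(cell c \<inter> Box) face_of cell c" by (simp add: cell_def face_of_cart_prod face_of_ivl_Int_box[OF c])
  moreover have "F \<inter> Box = F \<inter> (cell c \<inter> Box)" using F face_of_imp_subset by blast
  ultimately have G_face: "(F \<inter> Box) face_of cell c" using face_of_Int[OF F] by metis
  have "closed F"
    using face_of_imp_closed[OF polyhedron_imp_convex polyhedron_imp_closed F] polyhedron_cell by blast
  then have "compact (F \<inter> Box)" unfolding Box_def by (rule closed_Int_compact) simp
  moreover have "convex (F \<inter> Box)"
    unfolding Box_def by (rule convex_Int[OF face_of_imp_convex[OF F] convex_box(1)])
  ultimately have "F \<inter> Box = convex hull {e. e extreme_point_of (F \<inter> Box)}"
    by (rule Krein_Milman_Minkowski)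
  also have "\<dots> \<subseteq> convex hull (Vset F)"
  proof (rule hull_mono)
    show "{e. e extreme_point_of (F \<inter> Box)} \<subseteq> Vset F"
    proof
      fix e assume "e \<in> {e. e extreme_point_of (F \<inter> Box)}"
      then have "e extreme_point_of cell c" "e \<in> F" using extreme_point_of_face[OF G_face] by auto
      then show "e \<in> Vset F" using extreme_point_of_face[OF F] by (auto simp: Vset_def)
    qed
  qed
  finally show ?thesis by (simp add: Box_def)
qed

lemma proj_box_in_hull_Vset:
  assumes "c \<in> cell_index" "F face_of cell c" "x \<in> F"
  shows "proj_box x \<in> convex hull (Vset F)"
proof -
  have "proj_box x \<in> cbox (\<chi> k. kappa k 0) (\<chi> k. kappa k (int (n k)))"
    by (simp add: mem_box_cart proj_box_def)
  then show ?thesis using face_Int_box_subset_hull[OF assms(1,2)] proj_box_in_face[OF assms] by blast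
qed


definition excess_above :: "'m \<Rightarrow> real^'m \<Rightarrow> real" where
  "excess_above k x = max 0 (x$k - knot kl b k (n k))"

definition excess_below :: "'m \<Rightarrow> real^'m \<Rightarrow> real" where
  "excess_below k x = max 0 (knot kl b k 0 - x$k)"

text \<open>The constant factor is the one of \<open>is_norm_powr_le_cart\<close>.\<close>
definition radial :: "(real^'m \<Rightarrow> real) \<Rightarrow> real \<Rightarrow> real^'m \<Rightarrow> real^'m \<Rightarrow> real" where
  "radial N p u x = (\<Sum>k\<in>UNIV. N (axis k 1)) powr p *
     (\<Sum>k\<in>UNIV. (if u = axis k 1 then excess_above k x powr p else 0)
              + (if u = axis k (-1) then excess_below k x powr p else 0))"

lemma abs_diff_proj_box_powr:
  "\<bar>(x - proj_box x)$k\<bar> powr p = excess_above k x powr p + excess_below k x powr p"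
proof -
  have le: "kappa k 0 \<le> kappa k (int (n k))" by simp
  consider "kappa k (int (n k)) < x$k" | "x$k < kappa k 0" | "kappa k 0 \<le> x$k" "x$k \<le> kappa k (int (n k))"
    by linarith
  then show ?thesis
  proof cases
    case 1
    then have "kappa k 0 < x$k" using le by linarith
    then show ?thesis using 1 by (simp add: proj_box_def excess_above_def excess_below_def knot_eq_kappa)
  next
    case 2
    then have "x$k < kappa k (int (n k))" using le by linarith
    then show ?thesis using 2 by (simp add: proj_box_def excess_above_def excess_below_def knot_eq_kappa)
  next
    case 3
    then show ?thesis by (simp add: proj_box_def excess_above_def excess_below_def knot_eq_kappa)
  qed
qed

lemma sum_radial_Dset:
  assumes c: "c \<in> cell_index" and F: "F face_of cell c" and x: "x \<in> F"
  shows "(\<Sum>u\<in>Dset F. radial N p u x)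
       = (\<Sum>k\<in>UNIV. N (axis k 1)) powr p * (\<Sum>k\<in>UNIV. excess_above k x powr p + excess_below k x powr p)"
proof -
  have "finite (Dset F)"
    using Dset_face_of_cart_prod[OF F[unfolded cell_def]] by (rule finite_subset) auto
  have above: "(if axis k 1 \<in> Dset F then excess_above k x powr p else 0) = excess_above k x powr p" for k
  proof (cases "kappa k (int (n k)) < x$k")
    case True then show ?thesis using axis_in_Dset_face[OF c F x, of 1 k] by simp
  qed (simp add: excess_above_def knot_eq_kappa)
  have below: "(if axis k (-1) \<in> Dset F then excess_below k x powr p else 0) = excess_below k x powr p" for k
  proof (cases "x$k < kappa k 0")
    case True then show ?thesis using axis_in_Dset_face[OF c F x, of "-1" k] by simp
  qed (simp add: excess_below_def knot_eq_kappa)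
  have "(\<Sum>u\<in>Dset F. radial N p u x) = (\<Sum>k\<in>UNIV. N (axis k 1)) powr p *
     (\<Sum>u\<in>Dset F. \<Sum>k\<in>UNIV. (if u = axis k 1 then excess_above k x powr p else 0)
                             + (if u = axis k (-1) then excess_below k x powr p else 0))"
    unfolding radial_def by (rule sum_distrib_left[symmetric])
  also have "(\<Sum>u\<in>Dset F. \<Sum>k\<in>UNIV. (if u = axis k 1 then excess_above k x powr p else 0)
                             + (if u = axis k (-1) then excess_below k x powr p else 0))
      = (\<Sum>k\<in>UNIV. \<Sum>u\<in>Dset F. (if u = axis k 1 then excess_above k x powr p else 0)
                             + (if u = axis k (-1) then excess_below k x powr p else 0))"
    by (rule sum.swap)
  also have "\<dots> = (\<Sum>k\<in>UNIV. excess_above k x powr p + excess_below k x powr p)"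
    using \<open>finite (Dset F)\<close> by (simp add: sum.distrib above below)
  finally show ?thesis .
qed

lemma radial_set_radial:
  assumes N: "is_norm N" and p: "0 \<le> p"
  shows "radial_set N p (cell ` cell_index) (radial N p)"
  unfolding radial_set_def
proof (intro conjI ballI impI)
  show "0 \<le> radial N p u x" for u x
    unfolding radial_def using is_norm_nonneg[OF N] by (intro mult_nonneg_nonneg sum_nonneg) auto
  fix F x assume "F \<in> Faces (cell ` cell_index)" and x: "x \<in> F"
  then obtain c where c: "c \<in> cell_index" and F: "F face_of cell c" by (auto simp: Faces_def)
  let ?C = "convex hull (Vset F)"
  have hull: "proj_box x \<in> ?C" by (rule proj_box_in_hull_Vset[OF c F x])
  have "bdd_below ((\<lambda>y. N (x - y)) ` ?C)" using is_norm_nonneg[OF N] by (intro bdd_belowI) auto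
  then have "(INF y\<in>?C. N (x - y)) \<le> N (x - proj_box x)" using hull by (rule cINF_lower)
  moreover have "0 \<le> (INF y\<in>?C. N (x - y))" using hull is_norm_nonneg[OF N] by (intro cINF_greatest) auto
  ultimately have "(INF y\<in>?C. N (x - y)) powr p \<le> N (x - proj_box x) powr p"
    using p by (intro powr_mono2) auto
  also have "\<dots> \<le> (\<Sum>k\<in>UNIV. N (axis k 1)) powr p * (\<Sum>k\<in>UNIV. \<bar>(x - proj_box x)$k\<bar> powr p)"
    by (rule is_norm_powr_le_cart[OF N p])
  also have "\<dots> = (\<Sum>u\<in>Dset F. radial N p u x)"
    unfolding abs_diff_proj_box_powr sum_radial_Dset[OF c F x] ..
  finally show "(INF y\<in>?C. N (x - y)) powr p \<le> (\<Sum>u\<in>Dset F. radial N p u x)" .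
qed

lemma G0_single:
  assumes "j \<le> n k"
  shows "(\<lambda>x. max 0 ((x$k - knot kl b k j) / b k)) \<in> G0 n kl b"
proof -
  have "(\<lambda>x. if {k} = {} then 0 else max 0 (Max ((\<lambda>i. max 0 ((x $ i - knot kl b i j) / b i)) ` {k})))
      \<in> G0 n kl b"
    unfolding G0_def using assms by (intro CollectI exI[of _ "{k}"] exI[of _ "\<lambda>_. j"] conjI refl) auto
  then show ?thesis by simp
qed

lemma G0_subset_Gp: "G0 n kl b \<subseteq> Gp n kl b p"
  by (auto simp: Gp_def G1_def Gpow_def)

text \<open>For \<open>p = 1\<close> the excesses are affine combinations of \<open>G0\<close> functions and coordinates.\<close>
lemma excess_above_powr_in_span1: "(\<lambda>x. excess_above k x powr p) \<in> span1 (Gp n kl b p)"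
proof (cases "p = 1")
  case True
  have "(\<lambda>x. max 0 ((x$k - knot kl b k (n k)) / b k)) \<in> span1 (Gp n kl b p)"
    using G0_single[of "n k" k] G0_subset_Gp span1_superset by blast
  then have "(\<lambda>x. b k * max 0 ((x$k - knot kl b k (n k)) / b k)) \<in> span1 (Gp n kl b p)"
    by (rule span1_cmult)
  moreover have "(\<lambda>x. b k * max 0 ((x$k - knot kl b k (n k)) / b k)) = (\<lambda>x. excess_above k x powr p)"
    using True b_pos[of k] by (auto simp: excess_above_def max_def field_simps)
  ultimately show ?thesis by simp
next
  case False
  then show ?thesis by (intro span1_superset) (auto simp: Gp_def Gpow_def excess_above_def)
qed

lemma excess_below_powr_in_span1: "(\<lambda>x. excess_below k x powr p) \<in> span1 (Gp n kl b p)"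
proof (cases "p = 1")
  case True
  have "(\<lambda>x. max 0 ((x$k - knot kl b k 0) / b k)) \<in> span1 (Gp n kl b p)"
    using G0_single[of 0 k] G0_subset_Gp span1_superset by blast
  moreover have "(\<lambda>x. x$k) \<in> span1 (Gp n kl b p)"
    using True by (intro span1_superset) (auto simp: Gp_def G1_def)
  ultimately have "(\<lambda>x. knot kl b k 0 + ((-1) * x$k + b k * max 0 ((x$k - knot kl b k 0) / b k)))
      \<in> span1 (Gp n kl b p)"
    by (intro span1_add span1_const span1_cmult)
  moreover have "(\<lambda>x. knot kl b k 0 + ((-1) * x$k + b k * max 0 ((x$k - knot kl b k 0) / b k)))
      = (\<lambda>x. excess_below k x powr p)"
    using True b_pos[of k] by (auto simp: excess_below_def max_def field_simps)
  ultimately show ?thesis by simp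
next
  case False
  then show ?thesis by (intro span1_superset) (auto simp: Gp_def Gpow_def excess_below_def)
qed

lemma radial_in_span1: "radial N p u \<in> span1 (Gp n kl b p)"
proof -
  have "(\<lambda>x. \<Sum>k\<in>UNIV. (if u = axis k 1 then excess_above k x powr p else 0)
                     + (if u = axis k (-1) then excess_below k x powr p else 0)) \<in> span1 (Gp n kl b p)"
  proof (rule span1_sum)
    fix k
    have "(\<lambda>x. if u = axis k 1 then excess_above k x powr p else 0) \<in> span1 (Gp n kl b p)"
      using excess_above_powr_in_span1 span1_const[of 0] by (cases "u = axis k 1") simp_all
    moreover have "(\<lambda>x. if u = axis k (-1) then excess_below k x powr p else 0) \<in> span1 (Gp n kl b p)"
      using excess_below_powr_in_span1 span1_const[of 0] by (cases "u = axis k (-1)") simp_all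
    ultimately show "(\<lambda>x. (if u = axis k 1 then excess_above k x powr p else 0)
                  + (if u = axis k (-1) then excess_below k x powr p else 0)) \<in> span1 (Gp n kl b p)"
      by (rule span1_add)
  qed simp
  then show ?thesis unfolding radial_def[abs_def] by (rule span1_cmult)
qed

end

theorem proposition3p13:
  fixes N :: "real^'m \<Rightarrow> real"
    and n :: "'m \<Rightarrow> nat" and b kl :: "'m \<Rightarrow> real"
  assumes "is_norm N"
    and "\<And>i. n i \<ge> 1"
    and "\<And>i. b i > 0"
  shows "(\<forall>Y. Y \<subseteq> {x. \<forall>i. x $ i \<in> {knot kl b i 0 .. knot kl b i (n i)}} \<longrightarrow>
              polyhedral_cover (cover0 n kl b) Y)
         \<and> interp_function_set (G0 n kl b) (cover0 n kl b)
         \<and> (\<forall>Y. polyhedral_cover (cover_full n kl b) Y)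
         \<and> (\<forall>p::real. p \<ge> 1 \<longrightarrow> p_interp_function_set N p (Gp n kl b p) (cover_full n kl b))"
proof -
  interpret grid n kl b using assms(2,3) by unfold_locales auto
  have "\<forall>Y. Y \<subseteq> {x. \<forall>i. x $ i \<in> {knot kl b i 0 .. knot kl b i (n i)}} \<longrightarrow>
          polyhedral_cover (cover0 n kl b) Y"
    unfolding cover0_eq
    using polyhedral_cover_cells[OF bounded_cell_index_subset] box_subset_Union_bounded_cells by blast
  moreover have "interp_function_set (G0 n kl b) (cover0 n kl b)"
    unfolding interp_function_set_def cover0_eq
    using vertex_interp_set_hat[OF bounded_cell_index_subset] hat_in_span1
      Vcov_cells_subset_grid_points[OF bounded_cell_index_subset] by blast
  moreover have "\<forall>Y. polyhedral_cover (cover_full n kl b) Y"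
    unfolding cover_full_eq using polyhedral_cover_cells[OF order_refl] Union_cells by blast
  moreover have "p_interp_function_set N p (Gp n kl b p) (cover_full n kl b)" if "p \<ge> 1" for p
  proof -
    have "0 \<le> p" using that by simp
    then show ?thesis
      unfolding p_interp_function_set_def cover_full_eq
      using vertex_interp_set_hat[OF order_refl] hat_in_span1 Vcov_cells_subset_grid_points[OF order_refl]
        span1_mono[OF G0_subset_Gp] radial_set_radial[OF assms(1)] radial_in_span1 by blast
  qed
  ultimately show ?thesis by blast
qed

end
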